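(* Assume $\mu$ is finite, let $C(\eta)=\int_\Omega(1-\eta)\,\mathrm d\mu$ be the uniform cost, and let $\mathrm k$ be a kernel with finite double norm whose support $\{\mathrm k>0\}$ is a.e. symmetric. Then for a measurable set $A$, the strategy $\mathbb 1_A$ is Pareto optimal with $R_e[\mathrm k](\mathbb 1_A)=0$ if and only if $A$ is a maximal independent set of $\mathrm k$ (i.e. an independent set with $\mu(A)=\alpha(\mathrm k)$), and every Pareto optimal $\eta$ with $R_e[\mathrm k](\eta)=0$ is of this form. In particular maximal independent sets exist and $$c_\star=C_\star(0)=\mu(\Omega)-\alpha(\mathrm k).$$
   Context: Let $(\Omega,\mathscr F,\mu)$ be a measure space with $\mu$ a finite non-zero positive measure; functions equal $\mu$-a.e. are identified. $\Delta$ is the set of measurable $\eta:\Omega\to[0,1]$. A kernel is a measurable $\mathrm k:\Omega^2\to[0,\infty)$ with finite double norm: for some $p\in(1,\infty)$, $1/p+1/q=1$, $\big(\int(\int \mathrm k(x,y)^q\mu(\mathrm dy))^{p/q}\mu(\mathrm dx)\big)^{1/p}<\infty$; $T_{\mathrm k}g(x)=\int\mathrm k(x,y)g(y)\mu(\mathrm dy)$ on $L^p(\mu)$. For $\eta\in\Delta$, $R_e[\mathrm k](\eta)=\rho(T_{\mathrm k\eta})$ where $(\mathrm k\eta)(x,y)=\mathrm k(x,y)\eta(y)$ and $\rho$ is the spectral radius; $R_0=R_e[\mathrm k](\mathbb 1)$. Support a.e. symmetric: $\mathbb 1_{\{\mathrm k>0\}}(x,y)=\mathbb 1_{\{\mathrm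 k>0\}}(y,x)$ for $\mu^{\otimes2}$-a.e. $(x,y)$. With cost $C$, $R_{e\star}(c)=\min\{R_e(\eta):C(\eta)\le c\}$, $C_\star(\ell)=\min\{C(\eta):R_e(\eta)\le\ell\}$, $c_\star=C_\star(0)$, Pareto set $\mathcal P=\{\eta: C(\eta)=C_\star(R_e(\eta)),\ R_e(\eta)=R_{e\star}(C(\eta))\}$. A measurable $A$ is an independent set of $\mathrm k$ if $\mathrm k=0$ $\mu^{\otimes2}$-a.e. on $A\times A$; the independence number is $\alpha(\mathrm k)=\sup\{\mu(A): A\text{ independent set of }\mathrm k\}$. *)

theory Defs
  imports "HOL-Analysis.Analysis" "HOL-Probability.Probability"
begin

definition strategies :: "'a measure \<Rightarrow> ('a \<Rightarrow> real) set" where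
  "strategies M = {\<eta> \<in> borel_measurable M. \<forall>x\<in>space M. 0 \<le> \<eta> x \<and> \<eta> x \<le> 1}"

definition conj_exp :: "real \<Rightarrow> real" where
  "conj_exp p = p / (p - 1)"

definition is_kernel :: "'a measure \<Rightarrow> real \<Rightarrow> ('a \<Rightarrow> 'a \<Rightarrow> real) \<Rightarrow> bool" where
  "is_kernel M p k \<longleftrightarrow>
     1 < p \<and>
     (\<lambda>z. k (fst z) (snd z)) \<in> borel_measurable (M \<Otimes>\<^sub>M M) \<and>
     (\<forall>x\<in>space M. \<forall>y\<in>space M. 0 \<le> k x y) \<and>
     (AE x in M. (\<integral>\<^sup>+ y. ennreal (k x y powr conj_exp p) \<partial>M) < \<infinity>) \<and>
     (\<integral>\<^sup>+ x. ennreal ((enn2real (\<integral>\<^sup>+ y. ennreal (k x y powr conj_exp p) \<partial>M))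
                        powr (p / conj_exp p)) \<partial>M) < \<infinity>"

definition support_ae_symmetric :: "'a measure \<Rightarrow> ('a \<Rightarrow> 'a \<Rightarrow> real) \<Rightarrow> bool" where
  "support_ae_symmetric M k \<longleftrightarrow>
     (AE z in M \<Otimes>\<^sub>M M. (0 < k (fst z) (snd z)) \<longleftrightarrow> (0 < k (snd z) (fst z)))"

definition Lp_space :: "real \<Rightarrow> 'a measure \<Rightarrow> ('a \<Rightarrow> real) set" where
  "Lp_space p M = {g \<in> borel_measurable M. integrable M (\<lambda>x. \<bar>g x\<bar> powr p)}"

definition Lp_norm :: "real \<Rightarrow> 'a measure \<Rightarrow> ('a \<Rightarrow> real) \<Rightarrow> real" where
  "Lp_norm p M g = (\<integral>x. \<bar>g x\<bar> powr p \<partial>M) powr (1 / p)"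

definition T_op :: "'a measure \<Rightarrow> ('a \<Rightarrow> 'a \<Rightarrow> real) \<Rightarrow> ('a \<Rightarrow> real) \<Rightarrow> ('a \<Rightarrow> real) \<Rightarrow> ('a \<Rightarrow> real)" where
  "T_op M k \<eta> g = (\<lambda>x. \<integral>y. k x y * \<eta> y * g y \<partial>M)"

definition op_norm :: "real \<Rightarrow> 'a measure \<Rightarrow> (('a \<Rightarrow> real) \<Rightarrow> ('a \<Rightarrow> real)) \<Rightarrow> real" where
  "op_norm p M T = Sup ((\<lambda>g. Lp_norm p M (T g)) ` {g \<in> Lp_space p M. Lp_norm p M g \<le> 1})"

text \<open>Spectral radius of a bounded operator on L^p, via Gelfand's formula
  rho(T) = lim ||T^n||^(1/n) = inf_{n>=1} ||T^n||^(1/n).\<close>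
definition spectral_radius :: "real \<Rightarrow> 'a measure \<Rightarrow> (('a \<Rightarrow> real) \<Rightarrow> ('a \<Rightarrow> real)) \<Rightarrow> real" where
  "spectral_radius p M T = Inf ((\<lambda>n::nat. op_norm p M (T ^^ n) powr (1 / real n)) ` {1..})"

definition R_e :: "real \<Rightarrow> 'a measure \<Rightarrow> ('a \<Rightarrow> 'a \<Rightarrow> real) \<Rightarrow> ('a \<Rightarrow> real) \<Rightarrow> real" where
  "R_e p M k \<eta> = spectral_radius p M (T_op M k \<eta>)"

definition unif_cost :: "'a measure \<Rightarrow> ('a \<Rightarrow> real) \<Rightarrow> real" where
  "unif_cost M \<eta> = (\<integral>x. (1 - \<eta> x) \<partial>M)"

definition R_e_star :: "real \<Rightarrow> 'a measure \<Rightarrow> ('a \<Rightarrow> 'a \<Rightarrow> real) \<Rightarrow> real \<Rightarrow> real" where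
  "R_e_star p M k c = Inf (R_e p M k ` {\<eta> \<in> strategies M. unif_cost M \<eta> \<le> c})"

definition C_star :: "real \<Rightarrow> 'a measure \<Rightarrow> ('a \<Rightarrow> 'a \<Rightarrow> real) \<Rightarrow> real \<Rightarrow> real" where
  "C_star p M k l = Inf (unif_cost M ` {\<eta> \<in> strategies M. R_e p M k \<eta> \<le> l})"

definition pareto_optimal :: "real \<Rightarrow> 'a measure \<Rightarrow> ('a \<Rightarrow> 'a \<Rightarrow> real) \<Rightarrow> ('a \<Rightarrow> real) \<Rightarrow> bool" where
  "pareto_optimal p M k \<eta> \<longleftrightarrow>
     \<eta> \<in> strategies M \<and>
     unif_cost M \<eta> = C_star p M k (R_e p M k \<eta>) \<and>
     R_e p M k \<eta> = R_e_star p M k (unif_cost M \<eta>)"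

definition independent_set :: "'a measure \<Rightarrow> ('a \<Rightarrow> 'a \<Rightarrow> real) \<Rightarrow> 'a set \<Rightarrow> bool" where
  "independent_set M k A \<longleftrightarrow>
     A \<in> sets M \<and> (AE z in M \<Otimes>\<^sub>M M. z \<in> A \<times> A \<longrightarrow> k (fst z) (snd z) = 0)"

definition independence_number :: "'a measure \<Rightarrow> ('a \<Rightarrow> 'a \<Rightarrow> real) \<Rightarrow> real" where
  "independence_number M k = Sup (measure M ` {A. independent_set M k A})"

definition maximal_independent_set :: "'a measure \<Rightarrow> ('a \<Rightarrow> 'a \<Rightarrow> real) \<Rightarrow> 'a set \<Rightarrow> bool" where
  "maximal_independent_set M k A \<longleftrightarrow>
     independent_set M k A \<and> measure M A = independence_number M k"

end

theory Submission
  imports Defs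
begin

text \<open>If A is independent, then T = T_{k 1_A} satisfies T(T g) = 0, so R_e(1_A) = 0 at cost
  \<mu>(\<Omega>) - \<mu>(A). Conversely, R_e(\<eta>) = 0 forces {\<eta> > 0} to be independent: otherwise the
  symmetric truncated kernel s(x,y) = min(k(x,y) \<eta>(y), k(y,x) \<eta>(x), 1) has S 1 \<noteq> 0, the
  squared L^2 norms of S^j 1 are log-convex by Cauchy-Schwarz and hence grow geometrically, and
  S^n 1 \<le> T_{k\<eta>}^n 1 pointwise, so the spectral radius of T_{k\<eta>} is positive. As
  C(\<eta>) \<ge> \<mu>(\<Omega>) - \<mu>{\<eta> > 0} with equality only for \<eta> = 1_{\<eta> > 0} a.e., everything follows
  once a maximal independent set is known to exist, which is a compactness argument with an
  ultrafilter limit of measures.\<close>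

section \<open>Ultrafilters\<close>

definition is_ultrafilter :: "'a filter \<Rightarrow> bool" where
  "is_ultrafilter U \<longleftrightarrow> U \<noteq> bot \<and> (\<forall>P. eventually P U \<or> eventually (\<lambda>x. \<not> P x) U)"

lemma Inf_filter_chain_not_bot:
  fixes C :: "'a filter set"
  assumes "C \<noteq> {}" "bot \<notin> C" and chain: "\<And>G H. G \<in> C \<Longrightarrow> H \<in> C \<Longrightarrow> G \<le> H \<or> H \<le> G"
  shows "Inf C \<noteq> bot"
proof -
  have "\<exists>H\<in>C. H \<le> inf G G'" if "G \<in> C" "G' \<in> C" for G G'
    using chain[OF that] that by (metis inf.absorb_iff2 inf.orderE order_refl)
  then have "eventually P (Inf C) \<longleftrightarrow> (\<exists>G\<in>C. eventually P G)" for P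
    by (rule eventually_Inf_base[OF assms(1)])
  then show ?thesis using assms(2) eventually_False by metis
qed

lemma maximal_proper_filter_is_ultrafilter:
  assumes "U \<noteq> bot" and maximal: "\<And>G. G \<noteq> bot \<Longrightarrow> G \<le> U \<Longrightarrow> G = U"
  shows "is_ultrafilter U"
proof -
  have "eventually P U \<or> eventually (\<lambda>x. \<not> P x) U" for P
  proof (cases "eventually P U")
    case False
    define G where "G = inf U (principal {x. \<not> P x})"
    have "G \<noteq> bot" "G \<le> U"
      using False by (auto simp: G_def trivial_limit_def eventually_inf_principal)
    then have "G = U" by (rule maximal)
    moreover have "eventually (\<lambda>x. \<not> P x) G" by (simp add: G_def eventually_inf_principal)
    ultimately show ?thesis by simp
  qed simp
  then show ?thesis using assms(1) by (simp add: is_ultrafilter_def)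
qed

lemma exists_ultrafilter_finer:
  assumes "F \<noteq> bot"
  shows "\<exists>U. is_ultrafilter U \<and> U \<le> F"
proof -
  define S where "S = {G. G \<noteq> bot \<and> G \<le> F}"
  define r where "r = {(G, H). G \<in> S \<and> H \<in> S \<and> H \<le> G}"
  have field_r: "Field r = S" by (auto simp: Field_def r_def)
  have "Partial_order r"
    unfolding field_r partial_order_on_def preorder_on_def refl_on_def trans_def antisym_def
    by (auto simp: r_def)
  then have "\<exists>m\<in>Field r. \<forall>a\<in>Field r. (m, a) \<in> r \<longrightarrow> a = m"
  proof (rule Zorns_po_lemma)
    fix C assume C: "C \<in> Chains r"
    show "\<exists>u\<in>Field r. \<forall>a\<in>C. (a, u) \<in> r"
    proof (cases "C = {}")
      case True
      then show ?thesis using assms by (auto simp: field_r S_def)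
    next
      case False
      have CS: "C \<subseteq> S" using C by (auto simp: Chains_def r_def)
      have "Inf C \<noteq> bot"
      proof (rule Inf_filter_chain_not_bot[OF False])
        show "bot \<notin> C" using CS by (auto simp: S_def)
        show "G \<le> H \<or> H \<le> G" if "G \<in> C" "H \<in> C" for G H
          using C that unfolding Chains_def r_def by blast
      qed
      moreover obtain G where "G \<in> C" using False by auto
      then have "Inf C \<le> F" using CS by (auto simp: S_def intro: Inf_lower2)
      ultimately have "Inf C \<in> S" by (simp add: S_def)
      moreover have "(G, Inf C) \<in> r" if "G \<in> C" for G
        using that CS \<open>Inf C \<in> S\<close> by (auto simp: r_def Inf_lower)
      ultimately show ?thesis unfolding field_r by blast
    qed
  qed
  then obtain m where m: "m \<in> S" and maximal: "\<And>G. G \<in> S \<Longrightarrow> G \<le> m \<Longrightarrow> G = m"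
    unfolding field_r by (auto simp: r_def)
  have "is_ultrafilter m"
    using m maximal by (intro maximal_proper_filter_is_ultrafilter) (auto simp: S_def)
  then show ?thesis using m by (auto simp: S_def)
qed

lemma ultrafilter_tendsto_compact:
  assumes U: "is_ultrafilter U" and S: "compact S" and f: "eventually (\<lambda>x. f x \<in> S) U"
  shows "\<exists>L\<in>S. (f \<longlongrightarrow> L) U"
proof -
  have "filtermap f U \<noteq> bot" using U by (simp add: is_ultrafilter_def filtermap_bot_iff)
  moreover have "eventually (\<lambda>y. y \<in> S) (filtermap f U)" using f by (simp add: eventually_filtermap)
  ultimately obtain L where L: "L \<in> S" "inf (nhds L) (filtermap f U) \<noteq> bot"
    using S unfolding compact_filter by blast
  have "eventually (\<lambda>x. f x \<in> V) U" if "open V" "L \<in> V" for V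
  proof (rule ccontr)
    assume "\<not> eventually (\<lambda>x. f x \<in> V) U"
    then have "eventually (\<lambda>y. y \<notin> V) (filtermap f U)"
      using U by (auto simp: is_ultrafilter_def eventually_filtermap)
    moreover have "eventually (\<lambda>y. y \<in> V) (nhds L)" using that by (rule eventually_nhds_in_open)
    ultimately have "eventually (\<lambda>_. False) (inf (nhds L) (filtermap f U))"
      unfolding eventually_inf by blast
    then show False using L by (simp add: trivial_limit_def)
  qed
  then show ?thesis using L by (auto intro: topological_tendstoI)
qed

section \<open>Limits of restricted measures\<close>

lemma (in finite_measure) measure_UN_split:
  fixes D :: "nat \<Rightarrow> 'a set"
  assumes "range D \<subseteq> sets M" "disjoint_family D"
  shows "measure M (\<Union>i. D i) = (\<Sum>i<m. measure M (D i)) + measure M (\<Union>i\<in>{m..}. D i)"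
proof -
  have "{..<m} \<union> {m..} = (UNIV::nat set)" by auto
  then have "(\<Union>i. D i) = (\<Union>i\<in>{..<m}. D i) \<union> (\<Union>i\<in>{m..}. D i)"
    by (metis UN_Un)
  moreover have "(\<Union>i\<in>{..<m}. D i) \<inter> (\<Union>i\<in>{m..}. D i) = {}"
    using assms(2) by (auto simp: disjoint_family_on_def) (metis disjoint_iff leD)
  ultimately have "measure M (\<Union>i. D i) = measure M (\<Union>i\<in>{..<m}. D i) + measure M (\<Union>i\<in>{m..}. D i)"
    using assms(1) by (auto intro!: finite_measure_Union)
  moreover have "measure M (\<Union>i\<in>{..<m}. D i) = (\<Sum>i<m. measure M (D i))"
    using assms by (intro finite_measure_finite_Union) (auto intro: disjoint_family_on_mono)
  ultimately show ?thesis by simp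
qed

lemma (in finite_measure) measure_UN_tail_tendsto_0:
  fixes D :: "nat \<Rightarrow> 'a set"
  assumes "range D \<subseteq> sets M" "disjoint_family D"
  shows "(\<lambda>m. measure M (\<Union>i\<in>{m..}. D i)) \<longlonglongrightarrow> 0"
proof -
  have "(\<lambda>m. \<Sum>i<m. measure M (D i)) \<longlonglongrightarrow> measure M (\<Union>i. D i)"
    using finite_measure_UNION[OF assms] by (simp add: sums_def)
  then have "(\<lambda>m. measure M (\<Union>i. D i) - (\<Sum>i<m. measure M (D i)))
      \<longlonglongrightarrow> measure M (\<Union>i. D i) - measure M (\<Union>i. D i)"
    by (intro tendsto_intros)
  moreover have "measure M (\<Union>i\<in>{m..}. D i) = measure M (\<Union>i. D i) - (\<Sum>i<m. measure M (D i))" for m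
    using measure_UN_split[OF assms, of m] by simp
  ultimately show ?thesis by simp
qed

lemma (in finite_measure) finite_measure_of_dominated_additive:
  fixes \<mu>0 :: "'a set \<Rightarrow> real"
  assumes nonneg: "\<And>E. 0 \<le> \<mu>0 E" and le: "\<And>E. E \<in> sets M \<Longrightarrow> \<mu>0 E \<le> measure M E"
    and add: "\<And>E F. E \<in> sets M \<Longrightarrow> F \<in> sets M \<Longrightarrow> E \<inter> F = {} \<Longrightarrow> \<mu>0 (E \<union> F) = \<mu>0 E + \<mu>0 F"
  obtains \<nu> where "sets \<nu> = sets M" "finite_measure \<nu>" "\<And>E. E \<in> sets M \<Longrightarrow> measure \<nu> E = \<mu>0 E"
proof -
  have empty: "\<mu>0 {} = 0" using le[of "{}"] nonneg[of "{}"] by simp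
  have ca: "countably_additive (sets M) (\<lambda>E. ennreal (\<mu>0 E))"
  proof (rule sets.empty_continuous_imp_countably_additive)
    show "positive (sets M) (\<lambda>E. ennreal (\<mu>0 E))" by (simp add: positive_def empty)
    show "additive (sets M) (\<lambda>E. ennreal (\<mu>0 E))"
      by (simp add: additive_def add nonneg ennreal_plus)
    fix D :: "nat \<Rightarrow> 'a set" assume D: "range D \<subseteq> sets M" "decseq D" "(\<Inter>i. D i) = {}"
    have "(\<lambda>i. measure M (D i)) \<longlonglongrightarrow> 0"
      using finite_Lim_measure_decseq[OF D(1,2)] D(3) by simp
    have "(\<lambda>i. \<mu>0 (D i)) \<longlonglongrightarrow> 0"
      by (rule tendsto_sandwich[OF _ _ tendsto_const \<open>(\<lambda>i. measure M (D i)) \<longlonglongrightarrow> 0\<close>])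
        (use nonneg le D(1) in auto)
    then show "(\<lambda>i. ennreal (\<mu>0 (D i))) \<longlonglongrightarrow> 0"
      using tendsto_ennrealI by fastforce
  qed simp
  define \<nu> where "\<nu> = measure_of (space M) (sets M) (\<lambda>E. ennreal (\<mu>0 E))"
  have sets_\<nu>: "sets \<nu> = sets M" unfolding \<nu>_def by (simp add: sets.space_closed)
  have emeasure_\<nu>: "emeasure \<nu> E = ennreal (\<mu>0 E)" if "E \<in> sets M" for E
    unfolding \<nu>_def
    by (rule emeasure_measure_of_sigma[OF sets.sigma_algebra_axioms _ ca that])
       (simp add: positive_def empty)
  have "finite_measure \<nu>"
    by (rule finite_measureI) (simp add: sets_eq_imp_space_eq[OF sets_\<nu>] emeasure_\<nu>)
  moreover have "measure \<nu> E = \<mu>0 E" if "E \<in> sets M" for E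
    using emeasure_\<nu>[OF that] nonneg by (simp add: measure_def)
  ultimately show ?thesis using sets_\<nu> that by blast
qed

lemma (in finite_measure) ultralimit_of_restrictions:
  assumes U: "is_ultrafilter U" and A: "range A \<subseteq> sets M"
  obtains \<nu> where "sets \<nu> = sets M" "finite_measure \<nu>"
    "\<And>E. E \<in> sets M \<Longrightarrow> ((\<lambda>n. measure M (A n \<inter> E)) \<longlongrightarrow> measure \<nu> E) U"
proof -
  have Ubot: "U \<noteq> bot" using U by (simp add: is_ultrafilter_def)
  define \<nu>0 where "\<nu>0 E = Lim U (\<lambda>n. measure M (A n \<inter> E))" for E
  have \<nu>0_lim: "((\<lambda>n. measure M (A n \<inter> E)) \<longlongrightarrow> \<nu>0 E) U" for E
  proof -
    have "\<exists>L\<in>{0..measure M (space M)}. ((\<lambda>n. measure M (A n \<inter> E)) \<longlongrightarrow> L) U"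
      by (rule ultrafilter_tendsto_compact[OF U compact_Icc]) (simp add: bounded_measure)
    then show ?thesis unfolding \<nu>0_def using tendsto_Lim[OF Ubot] by blast
  qed
  have "0 \<le> \<nu>0 E" for E
    by (rule tendsto_lowerbound[OF \<nu>0_lim]) (simp_all add: Ubot)
  moreover have "\<nu>0 E \<le> measure M E" if "E \<in> sets M" for E
    by (rule tendsto_upperbound[OF \<nu>0_lim]) (use that in \<open>simp_all add: Ubot finite_measure_mono\<close>)
  moreover have "\<nu>0 (E \<union> F) = \<nu>0 E + \<nu>0 F" if "E \<in> sets M" "F \<in> sets M" "E \<inter> F = {}" for E F
  proof -
    have "measure M (A n \<inter> (E \<union> F)) = measure M (A n \<inter> E) + measure M (A n \<inter> F)" for n
      using that A by (subst Int_Un_distrib) (auto intro!: finite_measure_Union)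
    then have "((\<lambda>n. measure M (A n \<inter> (E \<union> F))) \<longlongrightarrow> \<nu>0 E + \<nu>0 F) U"
      by (simp add: tendsto_add \<nu>0_lim)
    then show ?thesis using tendsto_unique[OF Ubot \<nu>0_lim] by blast
  qed
  ultimately obtain \<nu> where "sets \<nu> = sets M" "finite_measure \<nu>"
    and "\<And>E. E \<in> sets M \<Longrightarrow> measure \<nu> E = \<nu>0 E"
    by (rule finite_measure_of_dominated_additive) blast+
  then show ?thesis using \<nu>0_lim that by simp
qed

lemma tendsto_approximation:
  fixes f :: "'b \<Rightarrow> real"
  assumes "\<And>e. e > 0 \<Longrightarrow> \<exists>g c. (g \<longlongrightarrow> c) F \<and> \<bar>c - L\<bar> \<le> e \<and> eventually (\<lambda>x. \<bar>f x - g x\<bar> \<le> e) F"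
  shows "(f \<longlongrightarrow> L) F"
proof (rule tendstoI)
  fix e :: real assume e: "e > 0"
  then obtain g c where g: "(g \<longlongrightarrow> c) F" "\<bar>c - L\<bar> \<le> e/3" "eventually (\<lambda>x. \<bar>f x - g x\<bar> \<le> e/3) F"
    using assms[of "e/3"] by auto
  have "eventually (\<lambda>x. dist (g x) c < e/3) F" using g(1) e by (intro tendstoD) auto
  with g(3) show "eventually (\<lambda>x. dist (f x) L < e) F"
  proof eventually_elim
    case (elim x)
    then show ?case using g(2) unfolding dist_real_def by arith
  qed
qed

lemma (in finite_measure) restrictions_tendsto_UN:
  fixes B :: "'b \<Rightarrow> 'a set" and G :: "nat \<Rightarrow> 'a set"
  assumes "finite_measure L" "sets L = sets M" and B: "range B \<subseteq> sets M"
    and G: "range G \<subseteq> sets M" "disjoint_family G"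
    and lim: "\<And>i. ((\<lambda>n. measure M (G i \<inter> B n)) \<longlongrightarrow> measure L (G i)) F"
  shows "((\<lambda>n. measure M ((\<Union>i. G i) \<inter> B n)) \<longlongrightarrow> measure L (\<Union>i. G i)) F"
proof (rule tendsto_approximation)
  interpret L: finite_measure L by fact
  have GL: "range G \<subseteq> sets L" using G assms(2) by simp
  fix e :: real assume e: "e > 0"
  have "eventually (\<lambda>m. measure M (\<Union>i\<in>{m..}. G i) < e \<and> measure L (\<Union>i\<in>{m..}. G i) < e) sequentially"
    using order_tendstoD(2)[OF measure_UN_tail_tendsto_0[OF G] e]
      order_tendstoD(2)[OF L.measure_UN_tail_tendsto_0[OF GL G(2)] e]
    by (rule eventually_conj)
  then obtain m where m1: "measure M (\<Union>i\<in>{m..}. G i) < e" and m2: "measure L (\<Union>i\<in>{m..}. G i) < e"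
    unfolding eventually_sequentially by blast
  have "((\<lambda>n. \<Sum>i<m. measure M (G i \<inter> B n)) \<longlongrightarrow> (\<Sum>i<m. measure L (G i))) F"
    using lim by (intro tendsto_sum) auto
  moreover have "\<bar>(\<Sum>i<m. measure L (G i)) - measure L (\<Union>i. G i)\<bar> \<le> e"
    using L.measure_UN_split[OF GL G(2), of m] m2 by simp
  moreover have "\<bar>measure M ((\<Union>i. G i) \<inter> B n) - (\<Sum>i<m. measure M (G i \<inter> B n))\<bar> \<le> e" for n
  proof -
    have G': "range (\<lambda>i. G i \<inter> B n) \<subseteq> sets M" "disjoint_family (\<lambda>i. G i \<inter> B n)"
      using G B by (auto simp: disjoint_family_on_def)
    have "measure M (\<Union>i\<in>{m..}. G i \<inter> B n) \<le> measure M (\<Union>i\<in>{m..}. G i)"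
      using G by (intro finite_measure_mono) auto
    moreover have "(\<Union>i. G i \<inter> B n) = (\<Union>i. G i) \<inter> B n" by auto
    ultimately show ?thesis using measure_UN_split[OF G', of m] m1 by simp
  qed
  ultimately show "\<exists>g c. (g \<longlongrightarrow> c) F \<and> \<bar>c - measure L (\<Union>i. G i)\<bar> \<le> e
      \<and> eventually (\<lambda>n. \<bar>measure M ((\<Union>i. G i) \<inter> B n) - g n\<bar> \<le> e) F"
    by (intro exI conjI always_eventually allI) auto
qed

lemma (in finite_measure) restrictions_pair_measure_Times_tendsto:
  assumes A: "range A \<subseteq> sets M" and sets_\<nu>: "sets \<nu> = sets M" and "finite_measure \<nu>"
    and lim: "\<And>E. E \<in> sets M \<Longrightarrow> ((\<lambda>n. measure M (A n \<inter> E)) \<longlongrightarrow> measure \<nu> E) F"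
    and ab: "a \<in> sets M" "b \<in> sets M"
  shows "((\<lambda>n. measure (M \<Otimes>\<^sub>M M) (a \<times> b \<inter> A n \<times> A n)) \<longlongrightarrow> measure (\<nu> \<Otimes>\<^sub>M \<nu>) (a \<times> b)) F"
proof -
  interpret N: finite_measure \<nu> by fact
  have "a \<times> b \<inter> A n \<times> A n = (A n \<inter> a) \<times> (A n \<inter> b)" for n by auto
  then have "measure (M \<Otimes>\<^sub>M M) (a \<times> b \<inter> A n \<times> A n) = measure M (A n \<inter> a) * measure M (A n \<inter> b)" for n
    using ab A by (auto simp: measure_def emeasure_pair_measure_Times enn2real_mult)
  moreover have "measure (\<nu> \<Otimes>\<^sub>M \<nu>) (a \<times> b) = measure \<nu> a * measure \<nu> b"
    using ab by (simp add: measure_def N.emeasure_pair_measure_Times sets_\<nu> enn2real_mult)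
  ultimately show ?thesis by (simp add: tendsto_mult lim ab)
qed

text \<open>Dynkin's argument transfers the convergence from rectangles to all measurable sets of
  the square.\<close>
lemma (in finite_measure) restrictions_pair_measure_tendsto:
  assumes A: "range A \<subseteq> sets M" and sets_\<nu>: "sets \<nu> = sets M" and "finite_measure \<nu>"
    and lim: "\<And>E. E \<in> sets M \<Longrightarrow> ((\<lambda>n. measure M (A n \<inter> E)) \<longlongrightarrow> measure \<nu> E) F"
    and D: "D \<in> sets (M \<Otimes>\<^sub>M M)"
  shows "((\<lambda>n. measure (M \<Otimes>\<^sub>M M) (D \<inter> A n \<times> A n)) \<longlongrightarrow> measure (\<nu> \<Otimes>\<^sub>M \<nu>) D) F"
proof -
  interpret N: finite_measure \<nu> by fact
  interpret MM: finite_measure "M \<Otimes>\<^sub>M M" by (rule finite_measure_pair_measure) unfold_locales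
  interpret NN: finite_measure "\<nu> \<Otimes>\<^sub>M \<nu>" by (rule finite_measure_pair_measure) unfold_locales
  have sets_NN: "sets (\<nu> \<Otimes>\<^sub>M \<nu>) = sets (M \<Otimes>\<^sub>M M)" by (rule sets_pair_measure_cong[OF sets_\<nu> sets_\<nu>])
  have AA: "A n \<times> A n \<in> sets (M \<Otimes>\<^sub>M M)" for n using A by auto
  have rect: "((\<lambda>n. measure (M \<Otimes>\<^sub>M M) (a \<times> b \<inter> A n \<times> A n)) \<longlongrightarrow> measure (\<nu> \<Otimes>\<^sub>M \<nu>) (a \<times> b)) F"
    if "a \<in> sets M" "b \<in> sets M" for a b
    using A sets_\<nu> \<open>finite_measure \<nu>\<close> lim that by (rule restrictions_pair_measure_Times_tendsto)
  show ?thesis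
    using Int_stable_pair_measure_generator pair_measure_closed D
    unfolding sets_pair_measure
  proof (induct rule: sigma_sets_induct_disjoint)
    case (basic A')
    then show ?case using rect by auto
  next
    case empty
    then show ?case by simp
  next
    case (compl A')
    have A': "A' \<in> sets (M \<Otimes>\<^sub>M M)" using compl(1) by (simp add: sets_pair_measure)
    have "(space M \<times> space M - A') \<inter> A n \<times> A n = A n \<times> A n - (A' \<inter> A n \<times> A n)"
      "space M \<times> space M \<inter> A n \<times> A n = A n \<times> A n" for n
      using sets.sets_into_space[of "A n"] A by auto
    then have "measure (M \<Otimes>\<^sub>M M) ((space M \<times> space M - A') \<inter> A n \<times> A n)
        = measure (M \<Otimes>\<^sub>M M) (space M \<times> space M \<inter> A n \<times> A n) - measure (M \<Otimes>\<^sub>M M) (A' \<inter> A n \<times> A n)" for n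
      using A' AA[of n] by (simp add: MM.finite_measure_Diff)
    moreover have "measure (\<nu> \<Otimes>\<^sub>M \<nu>) (space M \<times> space M - A')
        = measure (\<nu> \<Otimes>\<^sub>M \<nu>) (space M \<times> space M) - measure (\<nu> \<Otimes>\<^sub>M \<nu>) A'"
      using A' sets_NN sets.sets_into_space[OF A'] sets_eq_imp_space_eq[OF sets_\<nu>]
      by (intro NN.finite_measure_Diff) (auto simp: space_pair_measure)
    ultimately show ?case
      using tendsto_diff[OF rect[OF sets.top sets.top] compl(2)] by simp
  next
    case (union G)
    then show ?case
      using sets_NN AA NN.finite_measure_axioms
      by (intro MM.restrictions_tendsto_UN) (auto simp: sets_pair_measure)
  qed
qed

section \<open>Existence of maximal independent sets\<close>

lemma independent_set_iff_null_square:
  assumes k: "(\<lambda>z. k (fst z) (snd z)) \<in> borel_measurable (M \<Otimes>\<^sub>M M)"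
  shows "independent_set M k A \<longleftrightarrow>
    A \<in> sets M \<and> {z \<in> space (M \<Otimes>\<^sub>M M). k (fst z) (snd z) \<noteq> 0} \<inter> A \<times> A \<in> null_sets (M \<Otimes>\<^sub>M M)"
  unfolding independent_set_def
proof (intro conj_cong refl)
  assume "A \<in> sets M"
  then have N: "{z \<in> space (M \<Otimes>\<^sub>M M). k (fst z) (snd z) \<noteq> 0} \<inter> A \<times> A \<in> sets (M \<Otimes>\<^sub>M M)"
    using k by measurable
  show "(AE z in M \<Otimes>\<^sub>M M. z \<in> A \<times> A \<longrightarrow> k (fst z) (snd z) = 0) \<longleftrightarrow>
      {z \<in> space (M \<Otimes>\<^sub>M M). k (fst z) (snd z) \<noteq> 0} \<inter> A \<times> A \<in> null_sets (M \<Otimes>\<^sub>M M)"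
    by (subst AE_iff_null_sets[OF N]) (rule AE_cong, auto)
qed

lemma independent_set_le_independence_number:
  assumes "finite_measure M" "independent_set M k A"
  shows "measure M A \<le> independence_number M k"
  unfolding independence_number_def
proof (rule cSup_upper)
  show "measure M A \<in> measure M ` {A. independent_set M k A}" using assms by auto
  show "bdd_above (measure M ` {A. independent_set M k A})"
    using finite_measure.bounded_measure[OF assms(1)]
    by (auto simp: bdd_above_def independent_set_def intro!: exI[of _ "measure M (space M)"])
qed

lemma (in finite_measure) independent_sets_tendsto_independence_number:
  obtains A where "\<And>n. independent_set M k (A n)"
    "(\<lambda>n. measure M (A n)) \<longlonglongrightarrow> independence_number M k"
proof -
  define \<alpha> where "\<alpha> = independence_number M k"
  have "independent_set M k {}" by (simp add: independent_set_def)
  then have ne: "measure M ` {A. independent_set M k A} \<noteq> {}" by blast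
  have "\<exists>A. independent_set M k A \<and> \<alpha> - inverse (real (Suc n)) < measure M A" for n
  proof -
    have "\<alpha> - inverse (real (Suc n)) < Sup (measure M ` {A. independent_set M k A})"
      by (simp add: \<alpha>_def independence_number_def)
    then show ?thesis using less_cSupE[OF _ ne] by blast
  qed
  then obtain A where A: "\<And>n. independent_set M k (A n)"
    and A_low: "\<And>n. \<alpha> - inverse (real (Suc n)) < measure M (A n)"
    by metis
  have "(\<lambda>n. measure M (A n)) \<longlonglongrightarrow> \<alpha>"
  proof (rule tendsto_sandwich[of "\<lambda>n. \<alpha> - inverse (real (Suc n))" _ _ "\<lambda>n. \<alpha>"])
    show "\<forall>\<^sub>F n in sequentially. \<alpha> - inverse (real (Suc n)) \<le> measure M (A n)"
      using A_low by (intro always_eventually allI less_imp_le)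
    show "\<forall>\<^sub>F n in sequentially. measure M (A n) \<le> \<alpha>"
      unfolding \<alpha>_def using independent_set_le_independence_number[OF finite_measure_axioms A]
      by (intro always_eventually allI)
    have "(\<lambda>n. \<alpha> - inverse (real (Suc n))) \<longlonglongrightarrow> \<alpha> - 0"
      by (intro tendsto_intros LIMSEQ_inverse_real_of_nat)
    then show "(\<lambda>n. \<alpha> - inverse (real (Suc n))) \<longlonglongrightarrow> \<alpha>" by simp
  qed simp
  then show ?thesis unfolding \<alpha>_def by (rule that[OF A])
qed

lemma (in sigma_finite_measure) density_square_null:
  assumes f: "f \<in> borel_measurable M" "sigma_finite_measure (density M f)"
    and G: "G \<in> sets (M \<Otimes>\<^sub>M M)" "emeasure (density M f \<Otimes>\<^sub>M density M f) G = 0"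
  shows "G \<inter> {x \<in> space M. f x \<noteq> 0} \<times> {x \<in> space M. f x \<noteq> 0} \<in> null_sets (M \<Otimes>\<^sub>M M)"
proof -
  have "(\<integral>\<^sup>+ z. (\<lambda>(x,y). f x * f y) z * indicator G z \<partial>(M \<Otimes>\<^sub>M M)) = 0"
    using G f by (simp add: pair_measure_density sigma_finite_measure_axioms emeasure_density)
  then have "AE z in M \<Otimes>\<^sub>M M. (\<lambda>(x,y). f x * f y) z * indicator G z = 0"
    using G f by (subst (asm) nn_integral_0_iff_AE) auto
  then have "AE z in M \<Otimes>\<^sub>M M. z \<notin> G \<inter> {x \<in> space M. f x \<noteq> 0} \<times> {x \<in> space M. f x \<noteq> 0}"
    by eventually_elim (auto simp: indicator_def)
  moreover have "G \<inter> {x \<in> space M. f x \<noteq> 0} \<times> {x \<in> space M. f x \<noteq> 0} \<in> sets (M \<Otimes>\<^sub>M M)"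
    using G f by measurable
  ultimately show ?thesis using AE_iff_null_sets by blast
qed

lemma (in finite_measure) ultralimit_of_independent_sets:
  assumes k: "(\<lambda>z. k (fst z) (snd z)) \<in> borel_measurable (M \<Otimes>\<^sub>M M)"
    and A: "\<And>n. independent_set M k (A n)" and A_lim: "(\<lambda>n. measure M (A n)) \<longlonglongrightarrow> \<alpha>"
  obtains \<nu> where "sets \<nu> = sets M" "finite_measure \<nu>" "\<And>E. E \<in> sets M \<Longrightarrow> measure \<nu> E \<le> measure M E"
    "measure \<nu> (space M) = \<alpha>" "measure (\<nu> \<Otimes>\<^sub>M \<nu>) {z \<in> space (M \<Otimes>\<^sub>M M). k (fst z) (snd z) \<noteq> 0} = 0"
proof -
  define G where "G = {z \<in> space (M \<Otimes>\<^sub>M M). k (fst z) (snd z) \<noteq> 0}"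
  have G: "G \<in> sets (M \<Otimes>\<^sub>M M)" unfolding G_def using k by measurable
  have A_sets: "range A \<subseteq> sets M" using A by (auto simp: independent_set_def)
  obtain U where U: "is_ultrafilter U" "U \<le> sequentially"
    using exists_ultrafilter_finer[OF sequentially_bot] by blast
  then have U_bot: "U \<noteq> bot" by (simp add: is_ultrafilter_def)
  obtain \<nu> where sets_\<nu>: "sets \<nu> = sets M" and "finite_measure \<nu>"
    and lim: "\<And>E. E \<in> sets M \<Longrightarrow> ((\<lambda>n. measure M (A n \<inter> E)) \<longlongrightarrow> measure \<nu> E) U"
    using ultralimit_of_restrictions[OF U(1) A_sets] by blast
  have \<nu>_le: "measure \<nu> E \<le> measure M E" if "E \<in> sets M" for E
  proof (rule tendsto_upperbound[OF lim[OF that] _ U_bot])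
    show "\<forall>\<^sub>F n in U. measure M (A n \<inter> E) \<le> measure M E"
      using that A_sets by (intro always_eventually allI finite_measure_mono) auto
  qed
  have "A n \<inter> space M = A n" for n
    using A[of n] sets.sets_into_space by (auto simp: independent_set_def)
  then have "((\<lambda>n. measure M (A n \<inter> space M)) \<longlongrightarrow> \<alpha>) U"
    using tendsto_mono[OF U(2) A_lim] by simp
  then have \<nu>_space: "measure \<nu> (space M) = \<alpha>"
    using tendsto_unique[OF U_bot lim[OF sets.top]] by blast
  have "((\<lambda>n. measure (M \<Otimes>\<^sub>M M) (G \<inter> A n \<times> A n)) \<longlongrightarrow> measure (\<nu> \<Otimes>\<^sub>M \<nu>) G) U"
    by (rule restrictions_pair_measure_tendsto[OF A_sets sets_\<nu> \<open>finite_measure \<nu>\<close> lim G])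
  moreover have "measure (M \<Otimes>\<^sub>M M) (G \<inter> A n \<times> A n) = 0" for n
    using A[of n] independent_set_iff_null_square[OF k] by (auto simp: G_def measure_def)
  ultimately have "((\<lambda>n. 0) \<longlongrightarrow> measure (\<nu> \<Otimes>\<^sub>M \<nu>) G) U" by simp
  then have "measure (\<nu> \<Otimes>\<^sub>M \<nu>) G = 0" using tendsto_const_iff[OF U_bot] by metis
  then show ?thesis using that[OF sets_\<nu> \<open>finite_measure \<nu>\<close> \<nu>_le \<nu>_space] by (simp add: G_def)
qed

text \<open>The independent set is the support of the density of \<nu>.\<close>
lemma (in finite_measure) independent_set_of_dominated_measure:
  assumes k: "(\<lambda>z. k (fst z) (snd z)) \<in> borel_measurable (M \<Otimes>\<^sub>M M)"
    and sets_\<nu>: "sets \<nu> = sets M" and "finite_measure \<nu>"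
    and \<nu>_le: "\<And>E. E \<in> sets M \<Longrightarrow> measure \<nu> E \<le> measure M E"
    and null: "measure (\<nu> \<Otimes>\<^sub>M \<nu>) {z \<in> space (M \<Otimes>\<^sub>M M). k (fst z) (snd z) \<noteq> 0} = 0"
  obtains B where "independent_set M k B" "measure \<nu> (space M) \<le> measure M B"
proof -
  interpret N: finite_measure \<nu> by fact
  interpret NN: finite_measure "\<nu> \<Otimes>\<^sub>M \<nu>" by (rule finite_measure_pair_measure) unfold_locales
  define G where "G = {z \<in> space (M \<Otimes>\<^sub>M M). k (fst z) (snd z) \<noteq> 0}"
  have G: "G \<in> sets (M \<Otimes>\<^sub>M M)" unfolding G_def using k by measurable
  have "absolutely_continuous M \<nu>"
    unfolding absolutely_continuous_def
  proof
    fix E assume "E \<in> null_sets M"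
    then have E: "E \<in> sets M" "measure M E = 0" by (auto simp: measure_def)
    then have "measure \<nu> E = 0" using \<nu>_le[OF E(1)] by (simp add: antisym)
    then show "E \<in> null_sets \<nu>" using E(1) sets_\<nu> by (auto simp: N.emeasure_eq_measure)
  qed
  then obtain f where f: "f \<in> borel_measurable M" and \<nu>_density: "density M f = \<nu>"
    using Radon_Nikodym sets_\<nu> by blast
  define B where "B = {x \<in> space M. f x \<noteq> 0}"
  have B: "B \<in> sets M" unfolding B_def using f by measurable
  have "G \<inter> B \<times> B \<in> null_sets (M \<Otimes>\<^sub>M M)"
    unfolding B_def using f G \<nu>_density N.sigma_finite_measure_axioms null
    by (intro density_square_null) (auto simp: NN.emeasure_eq_measure G_def)
  then have B_indep: "independent_set M k B"
    using B independent_set_iff_null_square[OF k] by (simp add: G_def)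
  have "emeasure \<nu> (space M - B) = (\<integral>\<^sup>+ x. f x * indicator (space M - B) x \<partial>M)"
    using B f by (simp add: \<nu>_density[symmetric] emeasure_density)
  also have "\<dots> = (\<integral>\<^sup>+ x. 0 \<partial>M)"
    by (rule nn_integral_cong) (auto simp: B_def indicator_def)
  finally have "measure \<nu> (space M) = measure \<nu> B"
    using N.finite_measure_compl[of B] B sets_\<nu> sets_eq_imp_space_eq[OF sets_\<nu>]
    by (simp add: N.emeasure_eq_measure)
  then show ?thesis using that[OF B_indep] \<nu>_le[OF B] by simp
qed

lemma maximal_independent_set_exists:
  assumes "finite_measure M" and k: "(\<lambda>z. k (fst z) (snd z)) \<in> borel_measurable (M \<Otimes>\<^sub>M M)"
  shows "\<exists>A. maximal_independent_set M k A"
proof -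
  interpret finite_measure M by fact
  obtain A where "\<And>n. independent_set M k (A n)"
    and "(\<lambda>n. measure M (A n)) \<longlonglongrightarrow> independence_number M k"
    using independent_sets_tendsto_independence_number[where k=k] by blast
  then obtain \<nu> where \<nu>: "sets \<nu> = sets M" "finite_measure \<nu>"
    "\<And>E. E \<in> sets M \<Longrightarrow> measure \<nu> E \<le> measure M E"
    and \<nu>_space: "measure \<nu> (space M) = independence_number M k"
    and \<nu>_null: "measure (\<nu> \<Otimes>\<^sub>M \<nu>) {z \<in> space (M \<Otimes>\<^sub>M M). k (fst z) (snd z) \<noteq> 0} = 0"
    by (rule ultralimit_of_independent_sets[OF k]) blast
  obtain B where B: "independent_set M k B" "measure \<nu> (space M) \<le> measure M B"
    by (rule independent_set_of_dominated_measure[OF k \<nu> \<nu>_null]) blast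
  then show ?thesis
    using independent_set_le_independence_number[OF finite_measure_axioms B(1)] \<nu>_space
    by (auto simp: maximal_independent_set_def)
qed

section \<open>Bounded operators on L^p and the spectral radius\<close>

lemma integrable_mult_conjugate_powr:
  fixes f g :: "'a \<Rightarrow> real"
  assumes pq: "p > 1" "q > 1" "1/p + 1/q = 1"
    and [measurable]: "f \<in> borel_measurable M" "g \<in> borel_measurable M"
    and f0: "\<And>x. x \<in> space M \<Longrightarrow> 0 \<le> f x" and g0: "\<And>x. x \<in> space M \<Longrightarrow> 0 \<le> g x"
    and fi: "integrable M (\<lambda>x. f x powr p)" and gi: "integrable M (\<lambda>x. g x powr q)"
  shows "integrable M (\<lambda>x. f x * g x)"
proof (rule Bochner_Integration.integrable_bound)
  show "integrable M (\<lambda>x. f x powr p / p + g x powr q / q)" using fi gi by auto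
  show "AE x in M. norm (f x * g x) \<le> norm (f x powr p / p + g x powr q / q)"
    using Youngs_inequality[of p q] f0 g0 pq by (intro AE_I2) (auto simp: abs_mult)
qed simp

lemma Holder_inequality_nonneg:
  fixes f g :: "'a \<Rightarrow> real"
  assumes pq: "p > 1" "q > 1" "1/p + 1/q = 1"
    and [measurable]: "f \<in> borel_measurable M" "g \<in> borel_measurable M"
    and f0: "\<And>x. x \<in> space M \<Longrightarrow> 0 \<le> f x" and g0: "\<And>x. x \<in> space M \<Longrightarrow> 0 \<le> g x"
    and fi: "integrable M (\<lambda>x. f x powr p)" and gi: "integrable M (\<lambda>x. g x powr q)"
  shows "(\<integral>x. f x * g x \<partial>M) \<le> (\<integral>x. f x powr p \<partial>M) powr (1/p) * (\<integral>x. g x powr q \<partial>M) powr (1/q)"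
proof -
  have young: "a * b \<le> a powr p / p + b powr q / q" if "0 \<le> a" "0 \<le> b" for a b :: real
    using Youngs_inequality[of p q a b] pq that by simp
  have int: "integrable M (\<lambda>x. f x * g x)"
    using assms by (rule integrable_mult_conjugate_powr)
  define F where "F = (\<integral>x. f x powr p \<partial>M)"
  define G where "G = (\<integral>x. g x powr q \<partial>M)"
  show "(\<integral>x. f x * g x \<partial>M) \<le> F powr (1/p) * G powr (1/q)"
  proof (cases "F = 0 \<or> G = 0")
    case True
    then have "(AE x in M. f x powr p = 0) \<or> (AE x in M. g x powr q = 0)"
      using fi gi unfolding F_def G_def by (auto simp: integral_nonneg_eq_0_iff_AE)
    then have "AE x in M. f x * g x = 0" by (auto elim: eventually_mono)
    then show ?thesis by (simp add: integral_eq_zero_AE)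
  next
    case False
    then have Fp: "F > 0" and Gp: "G > 0" unfolding F_def G_def by (auto simp: less_le)
    define a where "a = F powr (1/p)"
    define b where "b = G powr (1/q)"
    have a: "a > 0" "a powr p = F" using Fp pq unfolding a_def by (auto simp: powr_powr)
    have b: "b > 0" "b powr q = G" using Gp pq unfolding b_def by (auto simp: powr_powr)
    have "f x * g x / (a * b) \<le> f x powr p / (p * F) + g x powr q / (q * G)" if "x \<in> space M" for x
    proof -
      have "(f x / a) * (g x / b) \<le> (f x / a) powr p / p + (g x / b) powr q / q"
        using young[of "f x / a" "g x / b"] f0 g0 that a b by auto
      also have "\<dots> = f x powr p / (p * F) + g x powr q / (q * G)"
        by (simp add: powr_divide a b mult.commute)
      finally show ?thesis by simp
    qed
    then have "(\<integral>x. f x * g x / (a * b) \<partial>M) \<le> (\<integral>x. f x powr p / (p * F) + g x powr q / (q * G) \<partial>M)"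
      using int fi gi by (intro integral_mono) auto
    also have "\<dots> = 1"
      using fi gi Fp Gp pq by (simp add: F_def G_def)
    finally have "(\<integral>x. f x * g x \<partial>M) / (a * b) \<le> 1" by simp
    then show ?thesis using a b by (simp add: divide_le_eq a_def b_def)
  qed
qed

lemma Lp_norm_nonneg: "0 \<le> Lp_norm p M g"
  by (simp add: Lp_norm_def)

lemma Lp_norm_const_mult:
  assumes "0 \<le> c" "p \<noteq> 0"
  shows "Lp_norm p M (\<lambda>x. c * h x) = c * Lp_norm p M h"
proof -
  have "(\<integral>x. \<bar>c * h x\<bar> powr p \<partial>M) = c powr p * (\<integral>x. \<bar>h x\<bar> powr p \<partial>M)"
    using assms by (simp add: abs_mult powr_mult)
  moreover have "(c powr p) powr (1/p) = c" using assms by (simp add: powr_powr)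
  ultimately show ?thesis by (simp add: Lp_norm_def powr_mult)
qed

definition Lp_bounded :: "real \<Rightarrow> 'a measure \<Rightarrow> (('a \<Rightarrow> real) \<Rightarrow> ('a \<Rightarrow> real)) \<Rightarrow> real \<Rightarrow> bool" where
  "Lp_bounded p M T N \<longleftrightarrow>
     (\<forall>h \<in> Lp_space p M. T h \<in> Lp_space p M \<and> Lp_norm p M (T h) \<le> N * Lp_norm p M h)"

lemma Lp_bounded_funpow:
  assumes "Lp_bounded p M T N" "0 \<le> N"
  shows "Lp_bounded p M (T ^^ n) (N ^ n)"
proof (induction n)
  case (Suc n)
  show ?case unfolding Lp_bounded_def
  proof
    fix h assume h: "h \<in> Lp_space p M"
    then have "(T ^^ n) h \<in> Lp_space p M" "Lp_norm p M ((T ^^ n) h) \<le> N ^ n * Lp_norm p M h"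
      using Suc by (auto simp: Lp_bounded_def)
    then have "T ((T ^^ n) h) \<in> Lp_space p M"
      "Lp_norm p M (T ((T ^^ n) h)) \<le> N * (N ^ n * Lp_norm p M h)"
      using assms by (auto simp: Lp_bounded_def intro: order_trans mult_left_mono)
    then show "(T ^^ Suc n) h \<in> Lp_space p M \<and> Lp_norm p M ((T ^^ Suc n) h) \<le> N ^ Suc n * Lp_norm p M h"
      by (simp add: mult.assoc)
  qed
qed (simp add: Lp_bounded_def)

lemma Lp_norm_le_op_norm:
  assumes "Lp_bounded p M T N" "0 \<le> N" "g \<in> Lp_space p M" "Lp_norm p M g \<le> 1"
  shows "Lp_norm p M (T g) \<le> op_norm p M T"
  unfolding op_norm_def
proof (rule cSup_upper)
  show "bdd_above ((\<lambda>g. Lp_norm p M (T g)) ` {g \<in> Lp_space p M. Lp_norm p M g \<le> 1})"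
  proof (rule bdd_aboveI2)
    fix h assume "h \<in> {g \<in> Lp_space p M. Lp_norm p M g \<le> 1}"
    then have "Lp_norm p M (T h) \<le> N * Lp_norm p M h" "N * Lp_norm p M h \<le> N"
      using assms by (auto simp: Lp_bounded_def intro: mult_left_le)
    then show "Lp_norm p M (T h) \<le> N" by linarith
  qed
qed (use assms in auto)

lemma spectral_radius_nonneg: "0 \<le> spectral_radius p M T"
  unfolding spectral_radius_def by (rule cInf_greatest) auto

lemma spectral_radius_eq_0_if_nilpotent:
  assumes "(T ^^ n) = (\<lambda>g x. 0)" "n \<ge> 1"
  shows "spectral_radius p M T = 0"
proof -
  have "(\<lambda>x. 0) \<in> Lp_space p M" by (simp add: Lp_space_def)
  then have "(\<lambda>g. Lp_norm p M ((T ^^ n) g)) ` {g \<in> Lp_space p M. Lp_norm p M g \<le> 1} = {0}"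
    using assms(1) by (auto simp: Lp_norm_def intro!: image_eqI[of _ _ "\<lambda>x. 0"])
  then have "op_norm p M (T ^^ n) = 0" by (simp add: op_norm_def)
  then have "0 \<in> (\<lambda>n. op_norm p M (T ^^ n) powr (1 / real n)) ` {1..}"
    using assms(2) by force
  then show ?thesis
    unfolding spectral_radius_def by (rule cInf_eq_minimum) auto
qed

lemma spectral_radius_ge_geometric:
  assumes "0 < E" "0 < \<rho>" and growth: "\<And>n. 1 \<le> n \<Longrightarrow> E * \<rho> ^ n \<le> op_norm p M (T ^^ n)"
  shows "min E 1 * \<rho> \<le> spectral_radius p M T"
  unfolding spectral_radius_def
proof (rule cInf_greatest)
  fix v assume "v \<in> (\<lambda>n. op_norm p M (T ^^ n) powr (1 / real n)) ` {1..}"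
  then obtain n where n: "n \<ge> 1" and v: "v = op_norm p M (T ^^ n) powr (1 / real n)" by auto
  have "min E 1 \<le> E powr (1 / real n)"
  proof (cases "E \<ge> 1")
    case True
    then show ?thesis using ge_one_powr_ge_zero[of E "1 / real n"] by simp
  next
    case False
    then have "E powr 1 \<le> E powr (1 / real n)" using assms n by (intro powr_mono') auto
    then show ?thesis using assms by simp
  qed
  then have "min E 1 * \<rho> \<le> E powr (1 / real n) * \<rho>"
    using assms by (intro mult_right_mono) auto
  also have "\<dots> = (E * \<rho> ^ n) powr (1 / real n)"
    using assms n by (simp add: powr_mult powr_realpow[symmetric] powr_powr)
  also have "\<dots> \<le> v"
    unfolding v using growth[OF n] assms by (intro powr_mono2) auto
  finally show "min E 1 * \<rho> \<le> v" .
qed auto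

text \<open>An odd power is controlled by the next even one through the bound N.\<close>
lemma op_norm_funpow_geometric_if_even_growth:
  assumes T: "Lp_bounded p M T N" "0 \<le> N" and g: "g \<in> Lp_space p M" "Lp_norm p M g \<le> 1"
    and "0 < D" "0 < \<rho>" and growth: "\<And>j. D * \<rho> ^ (2 * j) \<le> Lp_norm p M ((T ^^ (2 * j)) g)"
  shows "\<exists>E>0. \<forall>n. E * \<rho> ^ n \<le> op_norm p M (T ^^ n)"
proof -
  have iterate: "(T ^^ n) g \<in> Lp_space p M" "Lp_norm p M ((T ^^ n) g) \<le> op_norm p M (T ^^ n)" for n
    using Lp_bounded_funpow[OF T, of n] g T(2)
    by (auto simp: Lp_bounded_def intro: Lp_norm_le_op_norm[of _ _ _ "N ^ n"])
  have step: "Lp_norm p M ((T ^^ Suc n) g) \<le> N * Lp_norm p M ((T ^^ n) g)" for n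
    using T(1) iterate(1)[of n] by (simp add: Lp_bounded_def)
  have "0 < D * \<rho> ^ (2 * 1)" using \<open>0 < D\<close> \<open>0 < \<rho>\<close> by simp
  also have "\<dots> \<le> N * Lp_norm p M ((T ^^ 1) g)"
    using growth[of 1] step[of 1] by (simp add: numeral_2_eq_2)
  finally have "0 < N" using T(2) Lp_norm_nonneg[of p M] by (auto simp: zero_less_mult_iff)
  define E where "E = min D (D * \<rho> / N)"
  have "E * \<rho> ^ n \<le> op_norm p M (T ^^ n)" for n
  proof (cases "even n")
    case True
    then obtain j where n: "n = 2 * j" by (elim evenE)
    have "E * \<rho> ^ n \<le> D * \<rho> ^ n" using \<open>0 < \<rho>\<close> by (intro mult_right_mono) (auto simp: E_def)
    also have "\<dots> \<le> op_norm p M (T ^^ n)" using growth[of j] iterate(2)[of n] n by simp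
    finally show ?thesis .
  next
    case False
    then obtain j where n: "Suc n = 2 * Suc j" by (elim oddE) simp
    have "D * \<rho> * \<rho> ^ n = D * \<rho> ^ (2 * Suc j)" unfolding n[symmetric] by simp
    also have "\<dots> \<le> Lp_norm p M ((T ^^ Suc n) g)" unfolding n by (rule growth)
    also have "\<dots> \<le> N * Lp_norm p M ((T ^^ n) g)" by (rule step)
    also have "\<dots> \<le> N * op_norm p M (T ^^ n)" using iterate(2) T(2) by (rule mult_left_mono)
    finally have "(D * \<rho> / N) * \<rho> ^ n \<le> op_norm p M (T ^^ n)"
      using \<open>0 < N\<close> by (simp add: field_simps)
    moreover have "E * \<rho> ^ n \<le> (D * \<rho> / N) * \<rho> ^ n"
      using \<open>0 < \<rho>\<close> by (intro mult_right_mono) (auto simp: E_def)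
    ultimately show ?thesis by linarith
  qed
  moreover have "0 < E" using \<open>0 < D\<close> \<open>0 < \<rho>\<close> \<open>0 < N\<close> by (simp add: E_def)
  ultimately show ?thesis by blast
qed

lemma spectral_radius_pos_if_even_growth:
  assumes "Lp_bounded p M T N" "0 \<le> N" "g \<in> Lp_space p M" "Lp_norm p M g \<le> 1"
    and "0 < D" "0 < \<rho>" and "\<And>j. D * \<rho> ^ (2 * j) \<le> Lp_norm p M ((T ^^ (2 * j)) g)"
  shows "0 < spectral_radius p M T"
proof -
  obtain E where "0 < E" "\<And>n. E * \<rho> ^ n \<le> op_norm p M (T ^^ n)"
    using op_norm_funpow_geometric_if_even_growth[OF assms] by blast
  then have "min E 1 * \<rho> \<le> spectral_radius p M T"
    using \<open>0 < \<rho>\<close> by (intro spectral_radius_ge_geometric)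
  moreover have "0 < min E 1 * \<rho>" using \<open>0 < E\<close> \<open>0 < \<rho>\<close> by simp
  ultimately show ?thesis by linarith
qed

section \<open>Iterates of a symmetric kernel\<close>

lemma log_convex_geometric_lower_bound:
  fixes b :: "nat \<Rightarrow> real"
  assumes "b 0 > 0" "b 1 > 0" and log_convex: "\<And>j. b (Suc j) ^ 2 \<le> b j * b (Suc (Suc j))"
  shows "b 0 * (b 1 / b 0) ^ j \<le> b j"
proof -
  define r where "r = b 1 / b 0"
  have "r > 0" using assms by (simp add: r_def)
  have ratio: "b j > 0 \<and> r * b j \<le> b (Suc j)" for j
  proof (induction j)
    case 0
    then show ?case using assms by (simp add: r_def)
  next
    case (Suc j)
    then have "b (Suc j) > 0" using \<open>r > 0\<close> by (smt (verit) mult_pos_pos)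
    have "b (Suc j) * (r * b j) \<le> b (Suc j) * b (Suc j)"
      using Suc \<open>b (Suc j) > 0\<close> by (intro mult_left_mono) auto
    also have "\<dots> \<le> b j * b (Suc (Suc j))" using log_convex[of j] by (simp add: power2_eq_square)
    finally have "b j * (r * b (Suc j)) \<le> b j * b (Suc (Suc j))" by (simp add: ac_simps)
    then show ?case using Suc \<open>b (Suc j) > 0\<close> by simp
  qed
  show ?thesis
  proof (induction j)
    case (Suc j)
    have "b 0 * r ^ Suc j = r * (b 0 * r ^ j)" by simp
    also have "\<dots> \<le> r * b j" using Suc \<open>r > 0\<close> unfolding r_def by (intro mult_left_mono) auto
    also have "\<dots> \<le> b (Suc j)" using ratio by blast
    finally show ?case by (simp add: r_def)
  qed simp
qed

text \<open>S^n 1 for the integral operator S of s, computed in ennreal: negative values of s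
  count as 0.\<close>
fun kernel_iterate :: "'a measure \<Rightarrow> ('a \<Rightarrow> 'a \<Rightarrow> real) \<Rightarrow> nat \<Rightarrow> 'a \<Rightarrow> ennreal" where
  "kernel_iterate M s 0 = (\<lambda>x. 1)"
| "kernel_iterate M s (Suc n) = (\<lambda>x. \<integral>\<^sup>+ y. ennreal (s x y) * kernel_iterate M s n y \<partial>M)"

locale symmetric_kernel = finite_measure M for M :: "'a measure" +
  fixes s :: "'a \<Rightarrow> 'a \<Rightarrow> real"
  assumes measurable_s[measurable]: "(\<lambda>z. s (fst z) (snd z)) \<in> borel_measurable (M \<Otimes>\<^sub>M M)"
    and s_le_1: "s x y \<le> 1"
    and s_sym: "s x y = s y x"
begin

sublocale P: pair_sigma_finite M M by unfold_locales

lemma measurable_s_row[measurable]: "x \<in> space M \<Longrightarrow> (\<lambda>y. s x y) \<in> borel_measurable M"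
  using measurable_Pair2[OF measurable_s] by simp

lemma measurable_kernel_iterate[measurable]: "kernel_iterate M s n \<in> borel_measurable M"
proof (induction n)
  case (Suc n)
  note Suc[measurable]
  have "(\<lambda>z. ennreal (s (fst z) (snd z)) * kernel_iterate M s n (snd z)) \<in> borel_measurable (M \<Otimes>\<^sub>M M)"
    by measurable
  then have "(\<lambda>x. \<integral>\<^sup>+ y. ennreal (s x y) * kernel_iterate M s n y \<partial>M) \<in> borel_measurable M"
    by (intro borel_measurable_nn_integral) (simp add: case_prod_beta)
  then show ?case by simp
qed simp

lemma kernel_iterate_le: "kernel_iterate M s n x \<le> emeasure M (space M) ^ n"
proof (induction n arbitrary: x)
  case (Suc n)
  have "kernel_iterate M s (Suc n) x \<le> (\<integral>\<^sup>+ y. 1 * emeasure M (space M) ^ n \<partial>M)"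
    unfolding kernel_iterate.simps
    using Suc s_le_1 by (intro nn_integral_mono mult_mono) (auto simp: ennreal_leI)
  also have "\<dots> = emeasure M (space M) ^ Suc n" by (simp add: mult.commute)
  finally show ?case .
qed simp

lemma nn_integral_kernel_iterate_Suc_mult:
  "(\<integral>\<^sup>+ x. kernel_iterate M s (Suc a) x * kernel_iterate M s b x \<partial>M)
     = (\<integral>\<^sup>+ x. kernel_iterate M s a x * kernel_iterate M s (Suc b) x \<partial>M)"
proof -
  let ?S = "kernel_iterate M s"
  have "(\<integral>\<^sup>+ x. ?S (Suc a) x * ?S b x \<partial>M) = (\<integral>\<^sup>+ x. (\<integral>\<^sup>+ y. ennreal (s x y) * ?S a y * ?S b x \<partial>M) \<partial>M)"
    by (intro nn_integral_cong) (simp add: nn_integral_multc)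
  also have "\<dots> = (\<integral>\<^sup>+ y. (\<integral>\<^sup>+ x. ennreal (s x y) * ?S a y * ?S b x \<partial>M) \<partial>M)"
    by (rule P.Fubini'[symmetric]) (simp add: case_prod_beta)
  also have "\<dots> = (\<integral>\<^sup>+ y. ?S a y * (\<integral>\<^sup>+ x. ennreal (s y x) * ?S b x \<partial>M) \<partial>M)"
    by (auto intro!: nn_integral_cong simp: nn_integral_cmult[symmetric] s_sym ac_simps)
  also have "\<dots> = (\<integral>\<^sup>+ x. ?S a x * ?S (Suc b) x \<partial>M)" by simp
  finally show ?thesis .
qed

lemma nn_integral_kernel_iterate_add_mult:
  "(\<integral>\<^sup>+ x. kernel_iterate M s (a + i) x * kernel_iterate M s b x \<partial>M)
     = (\<integral>\<^sup>+ x. kernel_iterate M s a x * kernel_iterate M s (b + i) x \<partial>M)"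
proof (induction i arbitrary: a b)
  case (Suc i)
  then show ?case
    using nn_integral_kernel_iterate_Suc_mult[of a "b + i"] Suc[of "Suc a"] by simp
qed simp

definition sq_norm_iterate :: "nat \<Rightarrow> ennreal" where
  "sq_norm_iterate j = (\<integral>\<^sup>+ x. kernel_iterate M s j x * kernel_iterate M s j x \<partial>M)"

lemma nn_integral_kernel_iterate_double: "(\<integral>\<^sup>+ x. kernel_iterate M s (2 * j) x \<partial>M) = sq_norm_iterate j"
  using nn_integral_kernel_iterate_add_mult[of j j 0] by (simp add: sq_norm_iterate_def mult_2)

lemma sq_norm_iterate_log_convex:
  "sq_norm_iterate (Suc j) ^ 2 \<le> sq_norm_iterate j * sq_norm_iterate (Suc (Suc j))"
proof -
  have "sq_norm_iterate (Suc j) = (\<integral>\<^sup>+ x. kernel_iterate M s j x * kernel_iterate M s (Suc (Suc j)) x \<partial>M)"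
    unfolding sq_norm_iterate_def using nn_integral_kernel_iterate_Suc_mult[of j "Suc j"] by simp
  also have "\<dots> ^ 2 \<le> (\<integral>\<^sup>+ x. kernel_iterate M s j x ^ 2 \<partial>M) * (\<integral>\<^sup>+ x. kernel_iterate M s (Suc (Suc j)) x ^ 2 \<partial>M)"
    by (intro Cauchy_Schwarz_nn_integral measurable_kernel_iterate)
  finally show ?thesis by (simp add: sq_norm_iterate_def power2_eq_square)
qed

lemma sq_norm_iterate_le: "sq_norm_iterate j \<le> emeasure M (space M) ^ (2 * j + 1)"
proof -
  have "sq_norm_iterate j \<le> (\<integral>\<^sup>+ x. emeasure M (space M) ^ j * emeasure M (space M) ^ j \<partial>M)"
    unfolding sq_norm_iterate_def by (intro nn_integral_mono mult_mono kernel_iterate_le) auto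
  also have "\<dots> = emeasure M (space M) ^ j * emeasure M (space M) ^ j * emeasure M (space M)"
    by simp
  also have "\<dots> = emeasure M (space M) ^ (2 * j + 1)"
    by (metis mult_2 power_add power_one_right)
  finally show ?thesis .
qed

lemma sq_norm_iterate_finite: "sq_norm_iterate j < \<infinity>"
proof -
  have "emeasure M (space M) ^ (2 * j + 1) < \<infinity>"
    by (simp add: emeasure_eq_measure ennreal_mult_less_top power_less_top_ennreal)
  then show ?thesis using sq_norm_iterate_le[of j] by (rule order.strict_trans1[rotated])
qed

lemma sq_norm_iterate_geometric_growth:
  assumes "sq_norm_iterate 1 \<noteq> 0"
  shows "\<exists>c>0. \<exists>r>0. \<forall>j. c * r ^ j \<le> enn2real (sq_norm_iterate j)"
proof -
  define b where "b j = enn2real (sq_norm_iterate j)" for j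
  have sq_norm_b: "sq_norm_iterate j = ennreal (b j)" for j
    using sq_norm_iterate_finite[of j] by (simp add: b_def)
  have b_nonneg: "0 \<le> b j" for j by (simp add: b_def)
  have "b 1 > 0"
    using assms sq_norm_iterate_finite[of 1] by (simp add: b_def enn2real_positive_iff zero_less_iff_neq_zero)
  moreover have "emeasure M (space M) \<noteq> 0"
    using assms sq_norm_iterate_le[of 1] by (auto simp: zero_less_iff_neq_zero)
  then have "b 0 > 0"
    using measure_nonneg[of M "space M"]
    by (simp add: b_def sq_norm_iterate_def emeasure_eq_measure less_le)
  have "b (Suc j) ^ 2 \<le> b j * b (Suc (Suc j))" for j
  proof -
    have "ennreal (b (Suc j) ^ 2) \<le> ennreal (b j * b (Suc (Suc j)))"
      using sq_norm_iterate_log_convex[of j] b_nonneg by (simp add: sq_norm_b ennreal_power ennreal_mult)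
    then show ?thesis using b_nonneg by (simp add: ennreal_le_iff)
  qed
  then have "b 0 * (b 1 / b 0) ^ j \<le> b j" for j
    using log_convex_geometric_lower_bound \<open>b 0 > 0\<close> \<open>b 1 > 0\<close> by blast
  moreover have "b 1 / b 0 > 0" using \<open>b 0 > 0\<close> \<open>b 1 > 0\<close> by simp
  ultimately show ?thesis using \<open>b 0 > 0\<close> unfolding b_def by blast
qed

lemma sq_norm_iterate_1_eq_0:
  assumes "sq_norm_iterate 1 = 0"
  shows "AE z in M \<Otimes>\<^sub>M M. s (fst z) (snd z) \<le> 0"
proof -
  have "AE x in M. kernel_iterate M s 1 x = 0"
    using assms unfolding sq_norm_iterate_def by (subst (asm) nn_integral_0_iff_AE) auto
  then have "(\<integral>\<^sup>+ x. kernel_iterate M s 1 x \<partial>M) = 0" by (simp add: nn_integral_0_iff_AE)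
  moreover have "(\<integral>\<^sup>+ z. ennreal (s (fst z) (snd z)) \<partial>(M \<Otimes>\<^sub>M M))
      = (\<integral>\<^sup>+ x. \<integral>\<^sup>+ y. ennreal (s (fst (x, y)) (snd (x, y))) \<partial>M \<partial>M)"
    by (rule nn_integral_fst[symmetric]) measurable
  ultimately have "(\<integral>\<^sup>+ z. ennreal (s (fst z) (snd z)) \<partial>(M \<Otimes>\<^sub>M M)) = 0" by simp
  then have "AE z in M \<Otimes>\<^sub>M M. ennreal (s (fst z) (snd z)) = 0"
    by (subst (asm) nn_integral_0_iff_AE) auto
  then show ?thesis by eventually_elim (simp add: ennreal_eq_0_iff)
qed

end

section \<open>The integral operator of a kernel\<close>

text \<open>The truncation at 1 keeps the iterates bounded.\<close>
definition sym_min_kernel :: "('a \<Rightarrow> 'a \<Rightarrow> real) \<Rightarrow> ('a \<Rightarrow> real) \<Rightarrow> 'a \<Rightarrow> 'a \<Rightarrow> real" where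
  "sym_min_kernel k \<eta> x y = min (min (k x y * \<eta> y) (k y x * \<eta> x)) 1"

locale kernel_operator = finite_measure M for M :: "'a measure" +
  fixes p :: real and k :: "'a \<Rightarrow> 'a \<Rightarrow> real" and \<eta> :: "'a \<Rightarrow> real"
  assumes kernel: "is_kernel M p k" and strategy: "\<eta> \<in> strategies M"
begin

abbreviation "q \<equiv> conj_exp p"
abbreviation "row_norm x \<equiv> \<integral>\<^sup>+ y. ennreal (k x y powr q) \<partial>M"
abbreviation "T \<equiv> T_op M k \<eta>"
abbreviation "N \<equiv> (\<integral>x. enn2real (row_norm x) powr (p / q) \<partial>M) powr (1/p)"

lemma p_gt_1: "p > 1" using kernel by (simp add: is_kernel_def)
lemma q_gt_1: "q > 1" using p_gt_1 by (simp add: conj_exp_def field_simps)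
lemma conjugate: "1/p + 1/q = 1" using p_gt_1 by (simp add: conj_exp_def field_simps)

lemma measurable_k[measurable]: "(\<lambda>z. k (fst z) (snd z)) \<in> borel_measurable (M \<Otimes>\<^sub>M M)"
  using kernel by (simp add: is_kernel_def)

lemma measurable_k_row[measurable]: "x \<in> space M \<Longrightarrow> (\<lambda>y. k x y) \<in> borel_measurable M"
  using measurable_Pair2[OF measurable_k] by simp

lemma k_nonneg: "x \<in> space M \<Longrightarrow> y \<in> space M \<Longrightarrow> 0 \<le> k x y"
  using kernel by (simp add: is_kernel_def)

lemma measurable_\<eta>[measurable]: "\<eta> \<in> borel_measurable M"
  using strategy by (simp add: strategies_def)

lemma \<eta>_bounds: "x \<in> space M \<Longrightarrow> 0 \<le> \<eta> x \<and> \<eta> x \<le> 1"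
  using strategy by (simp add: strategies_def)

lemma integrable_row_norm: "integrable M (\<lambda>x. enn2real (row_norm x) powr (p / q))"
  using kernel by (intro integrableI_nonneg) (auto simp: is_kernel_def)

lemma T_pointwise_bound:
  assumes x: "x \<in> space M" "row_norm x < \<infinity>" and g: "g \<in> Lp_space p M"
  shows "integrable M (\<lambda>y. k x y * \<eta> y * g y)"
    and "\<bar>T g x\<bar> \<le> enn2real (row_norm x) powr (1/q) * (\<integral>y. \<bar>g y\<bar> powr p \<partial>M) powr (1/p)"
proof -
  have [measurable]: "g \<in> borel_measurable M" and gi: "integrable M (\<lambda>y. \<bar>g y\<bar> powr p)"
    using g by (auto simp: Lp_space_def)
  have ki: "integrable M (\<lambda>y. k x y powr q)"
    using x by (intro integrableI_nonneg) auto
  have k_int: "(\<integral>y. k x y powr q \<partial>M) = enn2real (row_norm x)"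
    using x by (subst integral_eq_nn_integral) auto
  note integrable = integrable_mult_conjugate_powr[where p=q and q=p and f="\<lambda>y. k x y" and g="\<lambda>y. \<bar>g y\<bar>" and M=M]
  note Holder = Holder_inequality_nonneg[where p=q and q=p and f="\<lambda>y. k x y" and g="\<lambda>y. \<bar>g y\<bar>" and M=M]
  have kg: "integrable M (\<lambda>y. k x y * \<bar>g y\<bar>)"
    using integrable p_gt_1 q_gt_1 conjugate x k_nonneg gi ki by auto
  have bound: "\<bar>k x y * \<eta> y * g y\<bar> \<le> k x y * \<bar>g y\<bar>" if "y \<in> space M" for y
    using k_nonneg[OF x(1) that] \<eta>_bounds[OF that]
    by (simp add: abs_mult mult_left_le_one_le mult.commute mult.left_commute)
  show int: "integrable M (\<lambda>y. k x y * \<eta> y * g y)"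
    using x bound k_nonneg[OF x(1)]
    by (intro Bochner_Integration.integrable_bound[OF kg] AE_I2) (auto simp: abs_mult)
  have "\<bar>T g x\<bar> \<le> (\<integral>y. \<bar>k x y * \<eta> y * g y\<bar> \<partial>M)"
    unfolding T_op_def using integral_norm_bound[of M "\<lambda>y. k x y * \<eta> y * g y"] by simp
  also have "\<dots> \<le> (\<integral>y. k x y * \<bar>g y\<bar> \<partial>M)"
    using int kg bound by (intro integral_mono) auto
  also have "\<dots> \<le> enn2real (row_norm x) powr (1/q) * (\<integral>y. \<bar>g y\<bar> powr p \<partial>M) powr (1/p)"
    using Holder p_gt_1 q_gt_1 conjugate x k_nonneg gi ki k_int by auto
  finally show "\<bar>T g x\<bar> \<le> enn2real (row_norm x) powr (1/q) * (\<integral>y. \<bar>g y\<bar> powr p \<partial>M) powr (1/p)" .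
qed

lemma Lp_bounded_T: "Lp_bounded p M T N"
  unfolding Lp_bounded_def
proof
  fix g assume g: "g \<in> Lp_space p M"
  have [measurable]: "g \<in> borel_measurable M" using g by (simp add: Lp_space_def)
  define I where "I = (\<integral>y. \<bar>g y\<bar> powr p \<partial>M)"
  have "I \<ge> 0" unfolding I_def by simp
  have "T g \<in> borel_measurable M" unfolding T_op_def by measurable
  have "AE x in M. row_norm x < \<infinity>" using kernel by (simp add: is_kernel_def)
  then have pointwise: "AE x in M. \<bar>T g x\<bar> powr p \<le> enn2real (row_norm x) powr (p / q) * I"
  proof (rule AE_mp[OF _ AE_I2], intro impI)
    fix x assume "x \<in> space M" "row_norm x < \<infinity>"
    then have "\<bar>T g x\<bar> powr p \<le> (enn2real (row_norm x) powr (1/q) * I powr (1/p)) powr p"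
      using T_pointwise_bound(2)[OF _ _ g] p_gt_1 by (intro powr_mono2) (auto simp: I_def)
    also have "\<dots> = enn2real (row_norm x) powr (p / q) * I"
      using p_gt_1 \<open>I \<ge> 0\<close> by (simp add: powr_mult powr_powr)
    finally show "\<bar>T g x\<bar> powr p \<le> enn2real (row_norm x) powr (p / q) * I" .
  qed
  have majorant: "integrable M (\<lambda>x. enn2real (row_norm x) powr (p / q) * I)"
    using integrable_row_norm by simp
  have int: "integrable M (\<lambda>x. \<bar>T g x\<bar> powr p)"
    using pointwise \<open>T g \<in> borel_measurable M\<close>
    by (intro Bochner_Integration.integrable_bound[OF majorant]) (auto elim!: eventually_mono)
  have "(\<integral>x. \<bar>T g x\<bar> powr p \<partial>M) \<le> (\<integral>x. enn2real (row_norm x) powr (p / q) * I \<partial>M)"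
    by (rule integral_mono_AE[OF int majorant pointwise])
  then have "Lp_norm p M (T g) \<le> ((\<integral>x. enn2real (row_norm x) powr (p / q) \<partial>M) * I) powr (1/p)"
    unfolding Lp_norm_def using p_gt_1 by (intro powr_mono2) auto
  also have "\<dots> = N * Lp_norm p M g"
    by (simp add: Lp_norm_def powr_mult I_def)
  finally show "T g \<in> Lp_space p M \<and> Lp_norm p M (T g) \<le> N * Lp_norm p M g"
    using int \<open>T g \<in> borel_measurable M\<close> by (simp add: Lp_space_def)
qed

lemma N_nonneg: "0 \<le> N" by simp

end

lemma (in finite_measure) integral_abs_le_Lp_norm:
  assumes "p > 1" "g \<in> Lp_space p M"
  shows "integrable M (\<lambda>x. \<bar>g x\<bar>)"
    and "(\<integral>x. \<bar>g x\<bar> \<partial>M) \<le> measure M (space M) powr (1 - 1/p) * Lp_norm p M g"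
proof -
  define q where "q = p / (p - 1)"
  have q: "q > 1" "1/p + 1/q = 1" "1/q = 1 - 1/p" using assms(1) by (auto simp: q_def field_simps)
  have g: "g \<in> borel_measurable M" "integrable M (\<lambda>x. \<bar>g x\<bar> powr p)"
    using assms(2) by (auto simp: Lp_space_def)
  note integrable = integrable_mult_conjugate_powr[where f="\<lambda>x. \<bar>g x\<bar>" and g="\<lambda>x. 1" and p=p and q=q and M=M]
  note Holder = Holder_inequality_nonneg[where f="\<lambda>x. \<bar>g x\<bar>" and g="\<lambda>x. 1" and p=p and q=q and M=M]
  show "integrable M (\<lambda>x. \<bar>g x\<bar>)" using integrable assms(1) q g by simp
  show "(\<integral>x. \<bar>g x\<bar> \<partial>M) \<le> measure M (space M) powr (1 - 1/p) * Lp_norm p M g"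
    using Holder assms(1) q g by (simp add: Lp_norm_def mult.commute)
qed

context kernel_operator
begin

sublocale S: symmetric_kernel M "sym_min_kernel k \<eta>"
proof
  have [measurable]: "(\<lambda>z. k (snd z) (fst z)) \<in> borel_measurable (M \<Otimes>\<^sub>M M)"
    using measurable_compose[OF measurable_pair_swap' measurable_k] by (simp add: case_prod_beta)
  show "(\<lambda>z. sym_min_kernel k \<eta> (fst z) (snd z)) \<in> borel_measurable (M \<Otimes>\<^sub>M M)"
    unfolding sym_min_kernel_def by measurable
qed (auto simp: sym_min_kernel_def min.commute)

abbreviation "V \<equiv> kernel_iterate M (sym_min_kernel k \<eta>)"
abbreviation "iterate_one n \<equiv> (T ^^ n) (\<lambda>x. 1)"

lemma iterate_one_Lp: "iterate_one n \<in> Lp_space p M"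
  using Lp_bounded_funpow[OF Lp_bounded_T N_nonneg, of n] by (simp add: Lp_bounded_def Lp_space_def)

lemma iterate_one_nonneg: "x \<in> space M \<Longrightarrow> 0 \<le> iterate_one n x"
proof (induction n arbitrary: x)
  case (Suc n)
  then show ?case
    using k_nonneg \<eta>_bounds by (simp add: T_op_def Bochner_Integration.integral_nonneg)
qed simp

lemma kernel_iterate_le_iterate_one: "AE x in M. V n x \<le> ennreal (iterate_one n x)"
proof (induction n)
  case (Suc n)
  have "AE x in M. row_norm x < \<infinity>" using kernel by (simp add: is_kernel_def)
  then show ?case
  proof (rule AE_mp[OF _ AE_I2], intro impI)
    fix x assume x: "x \<in> space M" "row_norm x < \<infinity>"
    have "V (Suc n) x \<le> (\<integral>\<^sup>+ y. ennreal (k x y * \<eta> y * iterate_one n y) \<partial>M)"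
      unfolding kernel_iterate.simps
    proof (rule nn_integral_mono_AE)
      show "AE y in M. ennreal (sym_min_kernel k \<eta> x y) * V n y \<le> ennreal (k x y * \<eta> y * iterate_one n y)"
        using Suc
      proof (rule AE_mp[OF _ AE_I2], intro impI)
        fix y assume "y \<in> space M" "V n y \<le> ennreal (iterate_one n y)"
        then show "ennreal (sym_min_kernel k \<eta> x y) * V n y \<le> ennreal (k x y * \<eta> y * iterate_one n y)"
          using iterate_one_nonneg[of y n]
          by (auto simp: sym_min_kernel_def ennreal_mult'' intro!: mult_mono ennreal_leI)
      qed
    qed
    also have "\<dots> = ennreal (iterate_one (Suc n) x)"
      using T_pointwise_bound(1)[OF x iterate_one_Lp] k_nonneg[OF x(1)] \<eta>_bounds iterate_one_nonneg
      by (simp add: T_op_def nn_integral_eq_integral AE_I2)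
    finally show "V (Suc n) x \<le> ennreal (iterate_one (Suc n) x)" .
  qed
qed simp

lemma independent_if_sq_norm_iterate_1_eq_0:
  assumes sym: "support_ae_symmetric M k" and "S.sq_norm_iterate 1 = 0"
  shows "independent_set M k {x \<in> space M. 0 < \<eta> x}"
  unfolding independent_set_def
proof
  show "AE z in M \<Otimes>\<^sub>M M. z \<in> {x \<in> space M. 0 < \<eta> x} \<times> {x \<in> space M. 0 < \<eta> x} \<longrightarrow> k (fst z) (snd z) = 0"
    using S.sq_norm_iterate_1_eq_0[OF assms(2)] sym[unfolded support_ae_symmetric_def] AE_space
  proof eventually_elim
    case (elim z)
    obtain x y where z: "z = (x, y)" by (cases z)
    show ?case
    proof (rule impI, rule ccontr)
      assume "z \<in> {x \<in> space M. 0 < \<eta> x} \<times> {x \<in> space M. 0 < \<eta> x}" "k (fst z) (snd z) \<noteq> 0"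
      then have xy: "x \<in> space M" "y \<in> space M" "0 < \<eta> x" "0 < \<eta> y" "k x y \<noteq> 0" using z by auto
      then have "0 < k x y" using k_nonneg[OF xy(1,2)] by simp
      moreover from this have "0 < k y x" using elim(2) z by simp
      ultimately have "0 < sym_min_kernel k \<eta> x y" using xy by (simp add: sym_min_kernel_def)
      then show False using elim(1) z by simp
    qed
  qed
qed measurable

lemma sq_norm_iterate_le_Lp_norm:
  "enn2real (S.sq_norm_iterate j) \<le> measure M (space M) powr (1 - 1/p) * Lp_norm p M (iterate_one (2 * j))"
proof -
  note L1 = integral_abs_le_Lp_norm[OF p_gt_1 iterate_one_Lp[of "2 * j"]]
  have "S.sq_norm_iterate j = (\<integral>\<^sup>+ x. V (2 * j) x \<partial>M)"
    by (rule S.nn_integral_kernel_iterate_double[symmetric])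
  also have "\<dots> \<le> (\<integral>\<^sup>+ x. ennreal \<bar>iterate_one (2 * j) x\<bar> \<partial>M)"
    using kernel_iterate_le_iterate_one[of "2 * j"]
    by (intro nn_integral_mono_AE) (auto elim!: eventually_mono intro: order_trans ennreal_leI)
  also have "\<dots> = ennreal (\<integral>x. \<bar>iterate_one (2 * j) x\<bar> \<partial>M)"
    using L1(1) by (intro nn_integral_eq_integral) auto
  finally have "enn2real (S.sq_norm_iterate j) \<le> (\<integral>x. \<bar>iterate_one (2 * j) x\<bar> \<partial>M)"
    using S.sq_norm_iterate_finite by (simp add: enn2real_leI)
  then show ?thesis using L1(2) by linarith
qed

lemma even_iterates_grow:
  assumes "S.sq_norm_iterate 1 \<noteq> 0"
  shows "\<exists>g \<in> Lp_space p M. Lp_norm p M g \<le> 1 \<and>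
    (\<exists>D>0. \<exists>\<rho>>0. \<forall>j. D * \<rho> ^ (2 * j) \<le> Lp_norm p M ((T ^^ (2 * j)) g))"
proof -
  obtain c r where "c > 0" "r > 0" and growth: "\<And>j. c * r ^ j \<le> enn2real (S.sq_norm_iterate j)"
    using S.sq_norm_iterate_geometric_growth[OF assms] by blast
  define m where "m = measure M (space M)"
  have "c \<le> m" using growth[of 0] by (simp add: m_def S.sq_norm_iterate_def emeasure_eq_measure)
  then have "m > 0" using \<open>c > 0\<close> by simp
  define a where "a = 1 / m powr (1/p)"
  have "a > 0" using \<open>m > 0\<close> by (simp add: a_def)
  define g where "g = (\<lambda>x::'a. a)"
  have scale: "(T ^^ n) g = (\<lambda>x. a * iterate_one n x)" for n
    unfolding g_def by (induction n) (auto simp: T_op_def ac_simps)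
  have "g \<in> Lp_space p M" by (simp add: g_def Lp_space_def)
  moreover have "Lp_norm p M g \<le> 1"
    using \<open>m > 0\<close> by (simp add: g_def a_def Lp_norm_def m_def powr_divide powr_powr)
  moreover have "\<forall>j. c / m powr (1 - 1/p) * a * sqrt r ^ (2 * j) \<le> Lp_norm p M ((T ^^ (2 * j)) g)"
  proof
    fix j
    have "c * r ^ j \<le> m powr (1 - 1/p) * Lp_norm p M (iterate_one (2 * j))"
      using growth[of j] sq_norm_iterate_le_Lp_norm[of j] by (simp add: m_def)
    then have lower: "c / m powr (1 - 1/p) * r ^ j \<le> Lp_norm p M (iterate_one (2 * j))"
      using \<open>m > 0\<close> by (simp add: field_simps)
    have "sqrt r ^ (2 * j) = r ^ j" using \<open>r > 0\<close> by (simp add: power_mult)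
    then have "c / m powr (1 - 1/p) * a * sqrt r ^ (2 * j) = a * (c / m powr (1 - 1/p) * r ^ j)"
      by simp
    also have "\<dots> \<le> a * Lp_norm p M (iterate_one (2 * j))"
      using \<open>a > 0\<close> lower by (intro mult_left_mono) auto
    also have "\<dots> = Lp_norm p M ((T ^^ (2 * j)) g)"
      using \<open>a > 0\<close> p_gt_1 by (simp add: scale Lp_norm_const_mult)
    finally show "c / m powr (1 - 1/p) * a * sqrt r ^ (2 * j) \<le> Lp_norm p M ((T ^^ (2 * j)) g)" .
  qed
  moreover have "c / m powr (1 - 1/p) * a > 0" "sqrt r > 0" using \<open>c > 0\<close> \<open>a > 0\<close> \<open>m > 0\<close> \<open>r > 0\<close> by simp_all
  ultimately show ?thesis by blast
qed

lemma support_independent_if_R_e_eq_0: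
  assumes "support_ae_symmetric M k" "R_e p M k \<eta> = 0"
  shows "independent_set M k {x \<in> space M. 0 < \<eta> x}"
proof (rule ccontr)
  assume "\<not> ?thesis"
  then have "S.sq_norm_iterate 1 \<noteq> 0" using independent_if_sq_norm_iterate_1_eq_0 assms(1) by blast
  then have "0 < spectral_radius p M T"
    using even_iterates_grow spectral_radius_pos_if_even_growth[OF Lp_bounded_T N_nonneg] by blast
  then show False using assms(2) by (simp add: R_e_def)
qed

end

section \<open>Costs and Pareto optimal strategies\<close>

lemma R_e_indicator_eq_0_if_independent:
  assumes "finite_measure M" "independent_set M k A"
  shows "R_e p M k (indicator A) = 0"
proof -
  interpret finite_measure M by fact
  interpret pair_sigma_finite M M by unfold_locales
  define T where "T = T_op M k (indicator A)"
  have indep: "AE z in M \<Otimes>\<^sub>M M. z \<in> A \<times> A \<longrightarrow> k (fst z) (snd z) = 0"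
    using assms(2) by (simp add: independent_set_def)
  have "AE z in M. AE y in M. (z, y) \<in> A \<times> A \<longrightarrow> k z y = 0"
    using AE_pair[OF indep] by simp
  then have inner: "AE z in M. indicator A z * T g z = 0" for g
  proof eventually_elim
    case (elim z)
    then have "z \<in> A \<Longrightarrow> AE y in M. k z y * indicator A y * g y = 0"
      by (auto elim!: eventually_mono simp: indicator_def)
    then show ?case by (auto simp: T_def T_op_def indicator_def integral_eq_zero_AE)
  qed
  have T: "T h x = (\<integral>y. k x y * indicator A y * h y \<partial>M)" for h x
    by (simp add: T_def T_op_def)
  have "T (T g) x = 0" for g x
  proof -
    have "AE y in M. k x y * indicator A y * T g y = 0"
      using inner[of g] by eventually_elim auto
    then show ?thesis unfolding T[of "T g"] by (rule integral_eq_zero_AE)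
  qed
  then have "T ^^ 2 = (\<lambda>g x. 0)" by (simp add: numeral_2_eq_2 fun_eq_iff)
  then show ?thesis unfolding R_e_def T_def by (rule spectral_radius_eq_0_if_nilpotent) simp
qed

lemma indicator_strategy: "A \<in> sets M \<Longrightarrow> indicator A \<in> strategies M"
  by (auto simp: strategies_def indicator_def)

lemma (in finite_measure) unif_cost_eq:
  assumes "\<eta> \<in> strategies M"
  shows "integrable M \<eta>" and "unif_cost M \<eta> = measure M (space M) - (\<integral>x. \<eta> x \<partial>M)"
proof -
  have "\<eta> \<in> borel_measurable M" "\<forall>x\<in>space M. 0 \<le> \<eta> x \<and> \<eta> x \<le> 1"
    using assms by (auto simp: strategies_def)
  then show int: "integrable M \<eta>" by (auto intro!: integrable_const_bound[where B=1])
  show "unif_cost M \<eta> = measure M (space M) - (\<integral>x. \<eta> x \<partial>M)"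
    unfolding unif_cost_def using int by (subst Bochner_Integration.integral_diff) auto
qed

lemma (in finite_measure) unif_cost_indicator:
  "A \<in> sets M \<Longrightarrow> unif_cost M (indicator A) = measure M (space M) - measure M A"
  using unif_cost_eq(2)[OF indicator_strategy] by simp

lemma (in finite_measure) unif_cost_ge_measure_support:
  assumes "\<eta> \<in> strategies M"
  defines "B \<equiv> {x \<in> space M. 0 < \<eta> x}"
  shows "measure M (space M) - measure M B \<le> unif_cost M \<eta>"
    and "unif_cost M \<eta> = measure M (space M) - measure M B \<Longrightarrow> AE x in M. \<eta> x = indicator B x"
proof -
  have [measurable]: "\<eta> \<in> borel_measurable M" using assms(1) by (simp add: strategies_def)
  have B: "B \<in> sets M" unfolding B_def by measurable
  have int_B: "integrable M (indicator B :: 'a \<Rightarrow> real)"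
    using B by (auto simp: emeasure_eq_measure)
  then have int: "integrable M (\<lambda>x. indicator B x - \<eta> x)"
    using unif_cost_eq(1)[OF assms(1)] by auto
  have nonneg: "\<And>x. x \<in> space M \<Longrightarrow> 0 \<le> indicator B x - \<eta> x"
    using assms(1) by (auto simp: strategies_def B_def indicator_def)
  have gap: "unif_cost M \<eta> - (measure M (space M) - measure M B) = (\<integral>x. indicator B x - \<eta> x \<partial>M)"
    using B unif_cost_eq[OF assms(1)] by (simp add: Bochner_Integration.integral_diff[OF int_B])
  show "measure M (space M) - measure M B \<le> unif_cost M \<eta>"
  proof -
    have "0 \<le> (\<integral>x. indicator B x - \<eta> x \<partial>M)"
      by (intro Bochner_Integration.integral_nonneg nonneg)
    then show ?thesis using gap by linarith
  qed
  assume "unif_cost M \<eta> = measure M (space M) - measure M B"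
  then have "AE x in M. indicator B x - \<eta> x = 0"
    using gap int nonneg by (subst integral_nonneg_eq_0_iff_AE[symmetric]) (auto intro: AE_I2)
  then show "AE x in M. \<eta> x = indicator B x" by auto
qed

locale kernel_with_symmetric_support = finite_measure M for M :: "'a measure" +
  fixes p :: real and k :: "'a \<Rightarrow> 'a \<Rightarrow> real"
  assumes kernel: "is_kernel M p k" and symmetric_support: "support_ae_symmetric M k"
begin

abbreviation "\<alpha> \<equiv> independence_number M k"

lemma independent_if_R_e_eq_0:
  assumes "\<eta> \<in> strategies M" "R_e p M k \<eta> = 0"
  shows "independent_set M k {x \<in> space M. 0 < \<eta> x}"
proof -
  interpret kernel_operator M p k \<eta> by unfold_locales (use kernel assms in auto)
  show ?thesis using support_independent_if_R_e_eq_0 symmetric_support assms(2) by blast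
qed

lemma unif_cost_ge_if_R_e_eq_0:
  assumes "\<eta> \<in> strategies M" "R_e p M k \<eta> = 0"
  shows "measure M (space M) - \<alpha> \<le> unif_cost M \<eta>"
  using unif_cost_ge_measure_support(1)[OF assms(1)]
    independent_set_le_independence_number[OF finite_measure_axioms independent_if_R_e_eq_0[OF assms]]
  by linarith

lemma ex_maximal_independent_set: "\<exists>A. maximal_independent_set M k A"
  using maximal_independent_set_exists[OF finite_measure_axioms, of k] kernel
  unfolding is_kernel_def by blast

lemma C_star_0: "C_star p M k 0 = measure M (space M) - \<alpha>"
  unfolding C_star_def
proof (rule cInf_eq_minimum)
  obtain A where A: "maximal_independent_set M k A"
    using ex_maximal_independent_set by blast
  then have "A \<in> sets M" "R_e p M k (indicator A) = 0"
    using R_e_indicator_eq_0_if_independent[OF finite_measure_axioms]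
    by (auto simp: maximal_independent_set_def independent_set_def)
  then have "indicator A \<in> {\<eta> \<in> strategies M. R_e p M k \<eta> \<le> 0}"
    by (simp add: indicator_strategy)
  moreover have "measure M (space M) - \<alpha> = unif_cost M (indicator A)"
    using A \<open>A \<in> sets M\<close> by (simp add: unif_cost_indicator maximal_independent_set_def)
  ultimately show "measure M (space M) - \<alpha> \<in> unif_cost M ` {\<eta> \<in> strategies M. R_e p M k \<eta> \<le> 0}"
    by blast
next
  fix c assume "c \<in> unif_cost M ` {\<eta> \<in> strategies M. R_e p M k \<eta> \<le> 0}"
  then obtain \<eta> where \<eta>: "\<eta> \<in> strategies M" "R_e p M k \<eta> \<le> 0" and c: "c = unif_cost M \<eta>"
    by blast
  then have "R_e p M k \<eta> = 0"
    using spectral_radius_nonneg[of p M "T_op M k \<eta>"] unfolding R_e_def by linarith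
  then show "measure M (space M) - \<alpha> \<le> c"
    using unif_cost_ge_if_R_e_eq_0 \<eta>(1) c by simp
qed

lemma pareto_optimal_iff_if_R_e_eq_0:
  assumes "\<eta> \<in> strategies M" "R_e p M k \<eta> = 0"
  shows "pareto_optimal p M k \<eta> \<longleftrightarrow> unif_cost M \<eta> = measure M (space M) - \<alpha>"
proof -
  have "R_e_star p M k (unif_cost M \<eta>) = 0"
    unfolding R_e_star_def using assms spectral_radius_nonneg
    by (intro cInf_eq_minimum) (auto simp: R_e_def)
  then show ?thesis using assms C_star_0 by (simp add: pareto_optimal_def)
qed

lemma pareto_optimal_indicator_iff:
  assumes A: "A \<in> sets M"
  shows "pareto_optimal p M k (indicator A) \<and> R_e p M k (indicator A) = 0 \<longleftrightarrow> maximal_independent_set M k A"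
proof -
  have strategy: "indicator A \<in> strategies M" using A by (rule indicator_strategy)
  note cost = unif_cost_indicator[OF A]
  show ?thesis
  proof
    assume "pareto_optimal p M k (indicator A) \<and> R_e p M k (indicator A) = 0"
    moreover have "{x \<in> space M. 0 < (indicator A x :: real)} = A"
      using sets.sets_into_space[OF A] by (auto split: split_indicator)
    ultimately have "independent_set M k A" "measure M A = \<alpha>"
      using independent_if_R_e_eq_0[OF strategy] pareto_optimal_iff_if_R_e_eq_0[OF strategy] cost
      by auto
    then show "maximal_independent_set M k A" by (simp add: maximal_independent_set_def)
  next
    assume "maximal_independent_set M k A"
    then have "R_e p M k (indicator A) = 0" "measure M A = \<alpha>"
      using R_e_indicator_eq_0_if_independent[OF finite_measure_axioms]
      by (auto simp: maximal_independent_set_def)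
    then show "pareto_optimal p M k (indicator A) \<and> R_e p M k (indicator A) = 0"
      using pareto_optimal_iff_if_R_e_eq_0[OF strategy] cost by simp
  qed
qed

lemma pareto_optimal_R_e_eq_0_imp_indicator:
  assumes "pareto_optimal p M k \<eta>" "R_e p M k \<eta> = 0"
  defines "B \<equiv> {x \<in> space M. 0 < \<eta> x}"
  shows "maximal_independent_set M k B" and "AE x in M. \<eta> x = indicator B x"
proof -
  have \<eta>: "\<eta> \<in> strategies M" using assms(1) by (simp add: pareto_optimal_def)
  have B: "independent_set M k B" unfolding B_def using independent_if_R_e_eq_0[OF \<eta> assms(2)] .
  have cost: "unif_cost M \<eta> = measure M (space M) - \<alpha>"
    using pareto_optimal_iff_if_R_e_eq_0 \<eta> assms(1,2) by blast
  then have "measure M B = \<alpha>"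
    using unif_cost_ge_measure_support(1)[OF \<eta>] independent_set_le_independence_number[OF finite_measure_axioms B]
    by (simp add: B_def)
  then show "maximal_independent_set M k B" using B by (simp add: maximal_independent_set_def)
  show "AE x in M. \<eta> x = indicator B x"
    using unif_cost_ge_measure_support(2)[OF \<eta>] cost \<open>measure M B = \<alpha>\<close> by (simp add: B_def)
qed

end

theorem mainTheorem3:
  fixes M :: "'a measure" and k :: "'a \<Rightarrow> 'a \<Rightarrow> real" and p :: real
  assumes "finite_measure M" and "emeasure M (space M) \<noteq> 0"
    and "is_kernel M p k"
    and "support_ae_symmetric M k"
  shows "(\<forall>A \<in> sets M.
            (pareto_optimal p M k (indicator A) \<and> R_e p M k (indicator A) = 0)
              \<longleftrightarrow> maximal_independent_set M k A)
       \<and> (\<forall>\<eta>. pareto_optimal p M k \<eta> \<and> R_e p M k \<eta> = 0 \<longrightarrow>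
            (\<exists>A. maximal_independent_set M k A \<and> (AE x in M. \<eta> x = indicator A x)))
       \<and> (\<exists>A. maximal_independent_set M k A)
       \<and> C_star p M k 0 = measure M (space M) - independence_number M k"
proof -
  interpret kernel_with_symmetric_support M p k
    using assms(1,3,4)
    by (simp add: kernel_with_symmetric_support_def kernel_with_symmetric_support_axioms_def)
  show ?thesis
    using pareto_optimal_indicator_iff pareto_optimal_R_e_eq_0_imp_indicator
      ex_maximal_independent_set C_star_0
    by blast
qed

end
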